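(* The GIT quotient $X=T\backslash\backslash (G_{2,6})^{ss}_T(\mathcal{L}(3\omega_2))$ is a complete intersection variety.
   Context: $G=SL(6,\mathbb{C})$, $T$ its diagonal maximal torus, $G_{2,6}$ the Grassmannian of 2-planes in $\mathbb{C}^6$ in its Plücker embedding, $\mathcal{L}(3\omega_2)=\mathcal{O}(3)$ with natural $T$-linearization. $X=\mathrm{Proj}\bigoplus_{d\ge0}H^0(G_{2,6},\mathcal{L}(3\omega_2)^{\otimes d})^T$, considered as a projective variety embedded by the degree-one invariants (the homogeneous coordinate ring is generated in degree one). *)

theory Defs
  imports Complex_Main "HOL-Library.Poly_Mapping"
begin

type_synonym mpoly = "(nat \<Rightarrow>\<^sub>0 nat) \<Rightarrow>\<^sub>0 complex"

definition meval :: "(nat \<Rightarrow> complex) \<Rightarrow> mpoly \<Rightarrow> complex" where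
  "meval a f = (\<Sum>m\<in>Poly_Mapping.keys f. Poly_Mapping.lookup f m * (\<Prod>i\<in>Poly_Mapping.keys m. a i ^ Poly_Mapping.lookup m i))"

definition tdeg :: "(nat \<Rightarrow>\<^sub>0 nat) \<Rightarrow> nat" where
  "tdeg m = sum (Poly_Mapping.lookup m) (Poly_Mapping.keys m)"

definition homog :: "nat \<Rightarrow> mpoly \<Rightarrow> bool" where
  "homog d f \<longleftrightarrow> (\<forall>m\<in>Poly_Mapping.keys f. tdeg m = d)"

definition vars :: "mpoly \<Rightarrow> nat set" where
  "vars f = \<Union> (Poly_Mapping.keys ` Poly_Mapping.keys f)"

text \<open>Plucker coordinates p_ij (0 \<le> i < j < 6), enumerated as variables 0..14.\<close>
definition plucker_pairs :: "(nat \<times> nat) list" where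
  "plucker_pairs = [(i, j). i \<leftarrow> [0..<6], j \<leftarrow> [Suc i..<6]]"

text \<open>A 2x6 complex matrix M (rows 0,1; columns 0..5) spans a point of the affine cone over
  G(2,6); its Plucker coordinates are the 2x2 minors.\<close>
definition pl :: "(nat \<Rightarrow> nat \<Rightarrow> complex) \<Rightarrow> nat \<Rightarrow> complex" where
  "pl M k = (case plucker_pairs ! k of (i, j) \<Rightarrow> M 0 i * M 1 j - M 0 j * M 1 i)"

definition torus :: "(nat \<Rightarrow> complex) \<Rightarrow> bool" where
  "torus t \<longleftrightarrow> (\<forall>i<6. t i \<noteq> 0) \<and> (\<Prod>i<6. t i) = 1"

text \<open>Action of t on the matrix (columns scaled), so p_ij is multiplied by t_i t_j.\<close>
definition colscale :: "(nat \<Rightarrow> nat \<Rightarrow> complex) \<Rightarrow> (nat \<Rightarrow> complex) \<Rightarrow> (nat \<Rightarrow> nat \<Rightarrow> complex)" where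
  "colscale M t = (\<lambda>r c. M r c * t c)"

text \<open>H^0(G_{2,6}, L(3 omega_2)^d)^T: restrictions to the cone of degree-3d forms in the
  Plucker coordinates (G_{2,6} is projectively normal), which are T-invariant.\<close>
definition inv_sections :: "nat \<Rightarrow> ((nat \<Rightarrow> nat \<Rightarrow> complex) \<Rightarrow> complex) set" where
  "inv_sections d =
     {F. (\<exists>f. vars f \<subseteq> {..<15} \<and> homog (3 * d) f \<and> F = (\<lambda>M. meval (pl M) f))
         \<and> (\<forall>t M. torus t \<longrightarrow> F (colscale M t) = F M)}"

definition is_basis_deg1 :: "((nat \<Rightarrow> nat \<Rightarrow> complex) \<Rightarrow> complex) list \<Rightarrow> bool" where
  "is_basis_deg1 fs \<longleftrightarrow>
     set fs \<subseteq> inv_sections 1 \<and>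
     (\<forall>c. (\<forall>M. (\<Sum>k<length fs. c k * (fs ! k) M) = 0) \<longrightarrow> (\<forall>k<length fs. c k = 0)) \<and>
     (\<forall>F\<in>inv_sections 1. \<exists>c. F = (\<lambda>M. \<Sum>k<length fs. c k * (fs ! k) M))"

text \<open>Homogeneous ideal of X in C[y_0..y_{N-1}] for the embedding by the basis fs:
  the kernel of y_k \<mapsto> fs_k.\<close>
definition ideal_of :: "((nat \<Rightarrow> nat \<Rightarrow> complex) \<Rightarrow> complex) list \<Rightarrow> mpoly set" where
  "ideal_of fs = {g. vars g \<subseteq> {..<length fs} \<and> (\<forall>M. meval (\<lambda>k. (fs ! k) M) g = 0)}"

definition gen_ideal :: "nat \<Rightarrow> mpoly list \<Rightarrow> mpoly set" where
  "gen_ideal N gs = {(\<Sum>i<length gs. h i * gs ! i) | h. \<forall>i<length gs. vars (h i) \<subseteq> {..<N}}"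

definition regular_seq :: "nat \<Rightarrow> mpoly list \<Rightarrow> bool" where
  "regular_seq N gs \<longleftrightarrow> 1 \<notin> gen_ideal N gs \<and>
     (\<forall>k<length gs. \<forall>h. vars h \<subseteq> {..<N} \<longrightarrow>
        h * gs ! k \<in> gen_ideal N (take k gs) \<longrightarrow> h \<in> gen_ideal N (take k gs))"

definition complete_intersection :: "nat \<Rightarrow> mpoly set \<Rightarrow> bool" where
  "complete_intersection N I \<longleftrightarrow>
     (\<exists>gs. (\<forall>g\<in>set gs. vars g \<subseteq> {..<N} \<and> (\<exists>d>0. homog d g)) \<and>
           regular_seq N gs \<and> gen_ideal N gs = I)"

end

theory Submission
  imports Defs "HOL-Computational_Algebra.Polynomial_Factorial" "HOL-Computational_Algebra.Field_as_Ring"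
begin

text \<open>
  Under the diagonal torus a Plucker monomial is invariant iff every index \<open>0, \<dots>, 5\<close> occurs
  in it equally often, so the degree-one invariants are spanned by the products
  \<open>p\<^sub>a\<^sub>b p\<^sub>c\<^sub>d p\<^sub>e\<^sub>f\<close> over the fifteen perfect matchings of \<open>{0, \<dots>, 5}\<close>; averaging over the fourth
  roots of unity in the torus already suffices to see this. By the three-term Plucker relations
  five of these products, \<open>z\<^sub>0, \<dots>, z\<^sub>4\<close>, form a basis, and they satisfy the cubic relation
  \<open>G = z\<^sub>4 Q + C\<close> with \<open>Q = z\<^sub>0 z\<^sub>3 - z\<^sub>1 z\<^sub>2\<close> and \<open>C = z\<^sub>2 (z\<^sub>0 - z\<^sub>1) (z\<^sub>1 - z\<^sub>3)\<close>. Since \<open>G\<close> is linear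
  in \<open>z\<^sub>4\<close> with prime leading coefficient \<open>Q\<close> not dividing \<open>C\<close>, it is a prime element of
  \<open>\<complex>[z\<^sub>0, \<dots>, z\<^sub>4]\<close>. An explicit chart shows that the image of \<open>z\<close> contains the part of the
  hypersurface \<open>G = 0\<close> where a certain polynomial \<open>d\<close> in \<open>z\<^sub>0, \<dots>, z\<^sub>3\<close> does not vanish; hence the
  pseudo-remainder modulo \<open>G\<close> of a form vanishing on the image is zero, and the form is divisible
  by \<open>G\<close>. So \<open>X\<close> is the cubic hypersurface \<open>G = 0\<close> in projective 4-space.
\<close>

locale comm_ring_hom =
  fixes hom :: "'a::comm_ring_1 \<Rightarrow> 'b::comm_ring_1"
  assumes hom_add: "hom (x + y) = hom x + hom y"
    and hom_mult: "hom (x * y) = hom x * hom y"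
    and hom_one: "hom 1 = 1"
begin

lemma hom_zero [simp]: "hom 0 = 0"
  using hom_add[of 0 0] by simp

lemma hom_uminus: "hom (- x) = - hom x"
  using hom_add[of x "- x"] by (metis add.right_inverse hom_zero neg_eq_iff_add_eq_0)

lemma hom_diff: "hom (x - y) = hom x - hom y"
  using hom_add[of x "- y"] by (simp add: hom_uminus)

lemma hom_sum: "hom (sum f A) = (\<Sum>x\<in>A. hom (f x))"
  by (induction A rule: infinite_finite_induct) (auto simp: hom_add)

lemma hom_prod: "hom (prod f A) = (\<Prod>x\<in>A. hom (f x))"
  by (induction A rule: infinite_finite_induct) (auto simp: hom_mult hom_one)

lemma hom_power: "hom (x ^ n) = hom x ^ n"
  by (induction n) (auto simp: hom_mult hom_one)

lemmas hom_distribs = hom_add hom_mult hom_one hom_uminus hom_diff hom_sum hom_prod hom_power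

end

lemma comm_ring_hom_id: "comm_ring_hom (\<lambda>x. x)"
  by unfold_locales auto

lemma comm_ring_hom_comp: "comm_ring_hom f \<Longrightarrow> comm_ring_hom g \<Longrightarrow> comm_ring_hom (\<lambda>x. g (f x))"
  unfolding comm_ring_hom_def by auto

lemma comm_ring_hom_const_poly: "comm_ring_hom (\<lambda>c. [:c:])"
  by unfold_locales auto

lemma comm_ring_hom_poly: "comm_ring_hom (\<lambda>p. poly p x)"
  by unfold_locales auto

lemma (in comm_ring_hom) comm_ring_hom_map_poly: "comm_ring_hom (map_poly hom)"
proof
  show "map_poly hom (p + q) = map_poly hom p + map_poly hom q" for p q
    by (rule poly_eqI) (simp add: coeff_map_poly hom_add)
  show "map_poly hom (p * q) = map_poly hom p * map_poly hom q" for p q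
    by (rule poly_eqI) (simp add: coeff_map_poly coeff_mult hom_sum hom_mult)
qed (simp add: hom_one)

lemma sum_delta_mult:
  "finite A \<Longrightarrow> k \<in> A \<Longrightarrow> (\<Sum>l\<in>A. (if k = l then 1 else 0) * f l) = (f k :: 'a::semiring_1)"
  by (simp add: if_distrib[of "\<lambda>a. a * _"] cong: if_cong)

lemma sum_lessThan_5:
  fixes f :: "nat \<Rightarrow> 'a::comm_monoid_add"
  shows "(\<Sum>j<5. f j) = f 0 + f 1 + f 2 + f 3 + f 4"
  by (simp add: eval_nat_numeral add.assoc)

lemma nat_less_5_cases: "(j::nat) < 5 \<Longrightarrow> j = 0 \<or> j = 1 \<or> j = 2 \<or> j = 3 \<or> j = 4"
  by arith

definition monom_eval :: "(nat \<Rightarrow> 'b::comm_monoid_mult) \<Rightarrow> (nat \<Rightarrow>\<^sub>0 nat) \<Rightarrow> 'b" where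
  "monom_eval a m = (\<Prod>i\<in>Poly_Mapping.keys m. a i ^ Poly_Mapping.lookup m i)"

definition monom_weight :: "(nat \<Rightarrow> nat) \<Rightarrow> (nat \<Rightarrow>\<^sub>0 nat) \<Rightarrow> nat" where
  "monom_weight w m = (\<Sum>i\<in>Poly_Mapping.keys m. w i * Poly_Mapping.lookup m i)"

lemma monom_eval_superset:
  "finite S \<Longrightarrow> Poly_Mapping.keys m \<subseteq> S \<Longrightarrow>
    monom_eval a m = (\<Prod>i\<in>S. a i ^ Poly_Mapping.lookup m i)"
  unfolding monom_eval_def by (rule prod.mono_neutral_left) (auto simp: in_keys_iff)

lemma monom_weight_superset:
  "finite S \<Longrightarrow> Poly_Mapping.keys m \<subseteq> S \<Longrightarrow>
    monom_weight w m = (\<Sum>i\<in>S. w i * Poly_Mapping.lookup m i)"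
  unfolding monom_weight_def by (rule sum.mono_neutral_left) (auto simp: in_keys_iff)

lemma monom_eval_zero [simp]: "monom_eval a 0 = 1"
  by (simp add: monom_eval_def)

lemma monom_eval_add: "monom_eval a (m + n) = monom_eval a m * monom_eval a n"
proof -
  let ?S = "Poly_Mapping.keys m \<union> Poly_Mapping.keys n"
  have "monom_eval a (m + n) = (\<Prod>i\<in>?S. a i ^ Poly_Mapping.lookup (m + n) i)"
    by (rule monom_eval_superset) (auto simp: keys_add)
  also have "\<dots> = (\<Prod>i\<in>?S. a i ^ Poly_Mapping.lookup m i) * (\<Prod>i\<in>?S. a i ^ Poly_Mapping.lookup n i)"
    by (simp add: lookup_add power_add prod.distrib)
  also have "\<dots> = monom_eval a m * monom_eval a n"
    by (simp add: monom_eval_superset[of ?S])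
  finally show ?thesis .
qed

lemma monom_weight_add: "monom_weight w (m + n) = monom_weight w m + monom_weight w n"
proof -
  let ?S = "Poly_Mapping.keys m \<union> Poly_Mapping.keys n"
  have "monom_weight w (m + n) = (\<Sum>i\<in>?S. w i * Poly_Mapping.lookup (m + n) i)"
    by (rule monom_weight_superset) (auto simp: keys_add)
  also have "\<dots> = (\<Sum>i\<in>?S. w i * Poly_Mapping.lookup m i) + (\<Sum>i\<in>?S. w i * Poly_Mapping.lookup n i)"
    by (simp add: lookup_add sum.distrib distrib_left)
  also have "\<dots> = monom_weight w m + monom_weight w n"
    by (simp add: monom_weight_superset[of ?S])
  finally show ?thesis .
qed

lemma monom_eval_single: "monom_eval a (Poly_Mapping.single i k) = a i ^ k"
  by (cases "k = 0") (auto simp: monom_eval_def)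

lemma monom_weight_single: "monom_weight w (Poly_Mapping.single k n) = w k * n"
  by (cases "n = 0") (simp_all add: monom_weight_def)

lemma monom_eval_cong:
  "(\<And>i. i \<in> Poly_Mapping.keys m \<Longrightarrow> a i = b i) \<Longrightarrow> monom_eval a m = monom_eval b m"
  unfolding monom_eval_def by (rule prod.cong) auto

lemma monom_eval_mult: "monom_eval (\<lambda>k. a k * b k) m = monom_eval a m * monom_eval b m"
  by (simp add: monom_eval_def power_mult_distrib prod.distrib)

lemma monom_eval_power_weight: "monom_eval (\<lambda>k. x ^ w k) m = x ^ monom_weight w m"
  by (simp add: monom_eval_def monom_weight_def power_sum flip: power_mult)

lemma (in comm_ring_hom) hom_monom_eval: "hom (monom_eval a m) = monom_eval (\<lambda>i. hom (a i)) m"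
  unfolding monom_eval_def by (simp add: hom_distribs)

lemma tdeg_eq_monom_weight: "tdeg m = monom_weight (\<lambda>_. 1) m"
  by (simp add: tdeg_def monom_weight_def)

lemma tdeg_add: "tdeg (m + n) = tdeg m + tdeg n"
  by (simp add: tdeg_eq_monom_weight monom_weight_add)

definition monom_vars_list :: "(nat \<Rightarrow>\<^sub>0 nat) \<Rightarrow> nat list" where
  "monom_vars_list m =
    concat (map (\<lambda>k. replicate (Poly_Mapping.lookup m k) k) (sorted_list_of_set (Poly_Mapping.keys m)))"

lemma sorted_monom_vars_list: "sorted (monom_vars_list m)"
proof -
  have "sorted (concat (map (\<lambda>k. replicate (f k) k) xs))" if "sorted xs" for f and xs :: "nat list"
    using that by (induction xs) (simp_all add: sorted_append)
  then show ?thesis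
    by (simp add: monom_vars_list_def)
qed

lemma set_monom_vars_list: "set (monom_vars_list m) = Poly_Mapping.keys m"
  by (auto simp: monom_vars_list_def in_keys_iff)

lemma poly_mapping_sum_single:
  "p = (\<Sum>m\<in>Poly_Mapping.keys p. Poly_Mapping.single m (Poly_Mapping.lookup p m))"
proof (rule poly_mapping_eqI)
  fix k
  show "Poly_Mapping.lookup p k =
      Poly_Mapping.lookup (\<Sum>m\<in>Poly_Mapping.keys p. Poly_Mapping.single m (Poly_Mapping.lookup p m)) k"
    by (cases "k \<in> Poly_Mapping.keys p") (auto simp: lookup_sum lookup_single when_def in_keys_iff)
qed

lemma sum_list_monom_vars_list: "(\<Sum>k\<leftarrow>monom_vars_list m. Poly_Mapping.single k 1) = m"
proof -
  have "(\<Sum>k\<leftarrow>replicate n i. Poly_Mapping.single k 1) = Poly_Mapping.single i n" for n i :: nat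
    by (induction n) (simp_all add: single_add[symmetric])
  then have "(\<Sum>k\<leftarrow>concat (map (\<lambda>k. replicate (f k) k) xs). Poly_Mapping.single k 1) =
      (\<Sum>k\<leftarrow>xs. Poly_Mapping.single k (f k))" for f and xs :: "nat list"
    by (induction xs) simp_all
  then have "(\<Sum>k\<leftarrow>monom_vars_list m. Poly_Mapping.single k 1) =
      (\<Sum>k\<in>Poly_Mapping.keys m. Poly_Mapping.single k (Poly_Mapping.lookup m k))"
    by (simp add: monom_vars_list_def sum_list_distinct_conv_sum_set)
  then show ?thesis
    by (simp flip: poly_mapping_sum_single)
qed

lemma
  fixes ks :: "nat list"
  shows monom_eval_sum_list_single: "monom_eval a (\<Sum>k\<leftarrow>ks. Poly_Mapping.single k 1) = (\<Prod>k\<leftarrow>ks. a k)"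
    and monom_weight_sum_list_single: "monom_weight w (\<Sum>k\<leftarrow>ks. Poly_Mapping.single k 1) = (\<Sum>k\<leftarrow>ks. w k)"
  by (induction ks) (simp_all add: monom_eval_add monom_eval_single monom_weight_add monom_weight_single,
      simp_all add: monom_weight_def)

lemma length_monom_vars_list: "length (monom_vars_list m) = tdeg m"
proof -
  have "tdeg m = monom_weight (\<lambda>_. 1) (\<Sum>k\<leftarrow>monom_vars_list m. Poly_Mapping.single k 1)"
    unfolding sum_list_monom_vars_list tdeg_eq_monom_weight ..
  also have "\<dots> = length (monom_vars_list m)"
    unfolding monom_weight_sum_list_single by (simp add: sum_list_triv)
  finally show ?thesis
    by simp
qed

definition mpoly_eval ::
    "('a::zero \<Rightarrow> 'b::comm_semiring_1) \<Rightarrow> (nat \<Rightarrow> 'b) \<Rightarrow> ((nat \<Rightarrow>\<^sub>0 nat) \<Rightarrow>\<^sub>0 'a) \<Rightarrow> 'b" where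
  "mpoly_eval hom a f = (\<Sum>m\<in>Poly_Mapping.keys f. hom (Poly_Mapping.lookup f m) * monom_eval a m)"

lemma meval_eq_mpoly_eval: "meval a f = mpoly_eval (\<lambda>c. c) a f"
  unfolding meval_def mpoly_eval_def monom_eval_def by simp

context comm_ring_hom
begin

lemma mpoly_eval_superset:
  "finite S \<Longrightarrow> Poly_Mapping.keys f \<subseteq> S \<Longrightarrow>
    mpoly_eval hom a f = (\<Sum>m\<in>S. hom (Poly_Mapping.lookup f m) * monom_eval a m)"
  unfolding mpoly_eval_def by (rule sum.mono_neutral_left) (auto simp: in_keys_iff)

lemma mpoly_eval_add: "mpoly_eval hom a (f + g) = mpoly_eval hom a f + mpoly_eval hom a g"
proof -
  let ?S = "Poly_Mapping.keys f \<union> Poly_Mapping.keys g"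
  have "mpoly_eval hom a (f + g) = (\<Sum>m\<in>?S. hom (Poly_Mapping.lookup (f + g) m) * monom_eval a m)"
    by (rule mpoly_eval_superset) (auto simp: keys_add)
  also have "\<dots> = mpoly_eval hom a f + mpoly_eval hom a g"
    by (simp add: lookup_add hom_add distrib_right sum.distrib mpoly_eval_superset[of ?S])
  finally show ?thesis .
qed

lemma mpoly_eval_zero [simp]: "mpoly_eval hom a 0 = 0"
  by (simp add: mpoly_eval_def)

lemma mpoly_eval_sum: "mpoly_eval hom a (sum f A) = (\<Sum>x\<in>A. mpoly_eval hom a (f x))"
  by (induction A rule: infinite_finite_induct) (auto simp: mpoly_eval_add)

lemma mpoly_eval_single: "mpoly_eval hom a (Poly_Mapping.single m c) = hom c * monom_eval a m"
  by (cases "c = 0") (auto simp: mpoly_eval_def)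

lemma mpoly_eval_mult: "mpoly_eval hom a (f * g) = mpoly_eval hom a f * mpoly_eval hom a g"
proof -
  let ?sf = "\<lambda>m. Poly_Mapping.single m (Poly_Mapping.lookup f m)"
  and ?sg = "\<lambda>n. Poly_Mapping.single n (Poly_Mapping.lookup g n)"
  have "f * g = (\<Sum>m\<in>Poly_Mapping.keys f. ?sf m) * (\<Sum>n\<in>Poly_Mapping.keys g. ?sg n)"
    using poly_mapping_sum_single[of f] poly_mapping_sum_single[of g] by simp
  also have "\<dots> = (\<Sum>m\<in>Poly_Mapping.keys f. \<Sum>n\<in>Poly_Mapping.keys g.
      Poly_Mapping.single (m + n) (Poly_Mapping.lookup f m * Poly_Mapping.lookup g n))"
    by (simp add: sum_distrib_left sum_distrib_right mult_single sum.swap[of _ "Poly_Mapping.keys g"])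
  finally have "mpoly_eval hom a (f * g) = (\<Sum>m\<in>Poly_Mapping.keys f. \<Sum>n\<in>Poly_Mapping.keys g.
      hom (Poly_Mapping.lookup f m) * monom_eval a m * (hom (Poly_Mapping.lookup g n) * monom_eval a n))"
    by (simp add: mpoly_eval_sum mpoly_eval_single hom_mult monom_eval_add mult_ac)
  also have "\<dots> = mpoly_eval hom a f * mpoly_eval hom a g"
    by (simp add: mpoly_eval_def sum_product)
  finally show ?thesis .
qed

lemma comm_ring_hom_mpoly_eval: "comm_ring_hom (mpoly_eval hom a)"
proof
  show "mpoly_eval hom a 1 = 1"
    using mpoly_eval_single[where m = 0 and c = 1] by (simp add: hom_one)
qed (simp_all add: mpoly_eval_add mpoly_eval_mult)

lemma hom_mpoly_eval:
  "comm_ring_hom \<psi> \<Longrightarrow> \<psi> (mpoly_eval hom a f) = mpoly_eval (\<lambda>c. \<psi> (hom c)) (\<lambda>i. \<psi> (a i)) f"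
  unfolding mpoly_eval_def by (simp add: comm_ring_hom.hom_distribs comm_ring_hom.hom_monom_eval)

end

lemma mpoly_eval_cong:
  "(\<And>i. i \<in> vars f \<Longrightarrow> a i = b i) \<Longrightarrow> mpoly_eval hom a f = mpoly_eval hom b f"
  unfolding mpoly_eval_def vars_def by (intro sum.cong refl arg_cong2[where f = "(*)"] monom_eval_cong) auto

definition mconst :: "'a::zero \<Rightarrow> (nat \<Rightarrow>\<^sub>0 nat) \<Rightarrow>\<^sub>0 'a" where
  "mconst c = Poly_Mapping.single 0 c"

definition mvar :: "nat \<Rightarrow> (nat \<Rightarrow>\<^sub>0 nat) \<Rightarrow>\<^sub>0 'a::{zero,one}" where
  "mvar i = Poly_Mapping.single (Poly_Mapping.single i 1) 1"

lemma mconst_0 [simp]: "mconst 0 = 0" and mconst_1 [simp]: "mconst 1 = 1"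
  by (simp_all add: mconst_def)

lemma comm_ring_hom_mconst: "comm_ring_hom (mconst :: 'a::comm_ring_1 \<Rightarrow> _)"
  by unfold_locales (auto simp: mconst_def single_add mult_single)

lemma (in comm_ring_hom) mpoly_eval_mconst: "mpoly_eval hom a (mconst c) = hom c"
  by (simp add: mconst_def mpoly_eval_single)

lemma (in comm_ring_hom) mpoly_eval_mvar: "mpoly_eval hom a (mvar i) = a i"
  by (simp add: mvar_def mpoly_eval_single hom_one monom_eval_single)

lemma mvar_power: "mvar i ^ k = Poly_Mapping.single (Poly_Mapping.single i k) (1::'a::comm_semiring_1)"
  by (induction k) (auto simp: mvar_def mult_single single_add[symmetric])

lemma prod_single_one:
  "(\<Prod>i\<in>A. Poly_Mapping.single (g i) (1::'a::comm_semiring_1)) = Poly_Mapping.single (\<Sum>i\<in>A. g i) 1"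
  by (induction A rule: infinite_finite_induct) (auto simp: mult_single)

lemma mpoly_eval_mconst_mvar: "mpoly_eval mconst mvar f = (f :: (nat \<Rightarrow>\<^sub>0 nat) \<Rightarrow>\<^sub>0 'a::comm_ring_1)"
proof -
  have "monom_eval mvar m = (Poly_Mapping.single m 1 :: (nat \<Rightarrow>\<^sub>0 nat) \<Rightarrow>\<^sub>0 'a)" for m
  proof -
    have "monom_eval mvar m = (\<Prod>i\<in>Poly_Mapping.keys m.
        Poly_Mapping.single (Poly_Mapping.single i (Poly_Mapping.lookup m i)) (1 :: 'a))"
      by (simp add: monom_eval_def mvar_power)
    also have "\<dots> = Poly_Mapping.single (\<Sum>i\<in>Poly_Mapping.keys m. Poly_Mapping.single i (Poly_Mapping.lookup m i)) 1"
      by (rule prod_single_one)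
    finally show ?thesis
      using poly_mapping_sum_single[of m] by simp
  qed
  then show ?thesis
    by (simp add: mpoly_eval_def mconst_def mult_single flip: poly_mapping_sum_single)
qed

lemma vars_add: "vars (f + g) \<subseteq> vars f \<union> vars g"
  unfolding vars_def using keys_add[of f g] by auto

lemma vars_mult: "vars (f * g) \<subseteq> vars f \<union> vars g"
proof
  fix i assume "i \<in> vars (f * g)"
  then obtain m where m: "m \<in> Poly_Mapping.keys (f * g)" "i \<in> Poly_Mapping.keys m"
    unfolding vars_def by auto
  then obtain a b where "m = a + b" "a \<in> Poly_Mapping.keys f" "b \<in> Poly_Mapping.keys g"
    using keys_mult[of f g] by blast
  with m keys_add[of a b] show "i \<in> vars f \<union> vars g"
    unfolding vars_def by auto
qed

lemma vars_uminus [simp]: "vars (- f) = vars f"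
  by (simp add: vars_def)

lemma vars_diff: "vars (f - g) \<subseteq> vars f \<union> vars g"
  using vars_add[of f "- g"] by simp

lemma vars_sum: "vars (sum f A) \<subseteq> (\<Union>x\<in>A. vars (f x))"
  by (induction A rule: infinite_finite_induct) (auto simp: vars_def dest: subsetD[OF keys_add])

lemma vars_one [simp]: "vars 1 = {}"
  by (simp add: vars_def)

lemma vars_power: "vars (f ^ n) \<subseteq> vars f"
  by (induction n) (use vars_mult in auto)

lemma vars_mconst [simp]: "vars (mconst c) = {}"
  by (simp add: vars_def mconst_def)

lemma vars_mvar [simp]: "vars (mvar i) = {i}"
  by (simp add: vars_def mvar_def)

lemma vars_add_subset: "vars f \<subseteq> S \<Longrightarrow> vars g \<subseteq> S \<Longrightarrow> vars (f + g) \<subseteq> S"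
  using vars_add by blast

lemma vars_mult_subset: "vars f \<subseteq> S \<Longrightarrow> vars g \<subseteq> S \<Longrightarrow> vars (f * g) \<subseteq> S"
  using vars_mult by blast

lemma vars_diff_subset: "vars f \<subseteq> S \<Longrightarrow> vars g \<subseteq> S \<Longrightarrow> vars (f - g) \<subseteq> S"
  using vars_diff by blast

lemma vars_sum_subset: "(\<And>x. x \<in> A \<Longrightarrow> vars (f x) \<subseteq> S) \<Longrightarrow> vars (sum f A) \<subseteq> S"
  using vars_sum by blast

lemma homog_zero: "homog d 0"
  by (simp add: homog_def)

lemma homog_add: "homog d f \<Longrightarrow> homog d g \<Longrightarrow> homog d (f + g)"
  unfolding homog_def using keys_add[of f g] by auto

lemma homog_mult: "homog d f \<Longrightarrow> homog e g \<Longrightarrow> homog (d + e) (f * g)"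
  unfolding homog_def using keys_mult[of f g] by (force simp: tdeg_add)

lemma homog_diff: "homog d f \<Longrightarrow> homog d g \<Longrightarrow> homog d (f - g)"
  using homog_add[of d f "- g"] by (simp add: homog_def)

lemma homog_sum: "(\<And>x. x \<in> A \<Longrightarrow> homog d (f x)) \<Longrightarrow> homog d (sum f A)"
  by (induction A rule: infinite_finite_induct) (simp_all add: homog_add homog_zero)

lemma homog_mconst_mult: "homog d f \<Longrightarrow> homog d (mconst c * f)"
  using homog_mult[of 0 "mconst c" d f] by (simp add: homog_def mconst_def tdeg_def)

lemma homog_mvar: "homog 1 (mvar i)"
  by (simp add: homog_def mvar_def tdeg_def)

definition poly_eval :: "('a::zero \<Rightarrow> 'b::comm_semiring_1) \<Rightarrow> 'b \<Rightarrow> 'a poly \<Rightarrow> 'b" where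
  "poly_eval hom x p = poly (map_poly hom p) x"

context comm_ring_hom
begin

lemma comm_ring_hom_poly_eval: "comm_ring_hom (poly_eval hom x)"
  unfolding poly_eval_def
  by (rule comm_ring_hom_comp[OF comm_ring_hom_map_poly comm_ring_hom_poly])

lemma poly_eval_const [simp]: "poly_eval hom x [:c:] = hom c"
  by (simp add: poly_eval_def map_poly_pCons)

lemma poly_eval_X [simp]: "poly_eval hom x [:0, 1:] = x"
  by (simp add: poly_eval_def map_poly_pCons hom_one)

lemma poly_eval_smult: "poly_eval hom x (smult c p) = hom c * poly_eval hom x p"
  using comm_ring_hom.hom_mult[OF comm_ring_hom_poly_eval, of x "[:c:]" p] by simp

lemma poly_eval_lifted_var:
  assumes "\<And>i. i < k \<Longrightarrow> hom (v i) = a i"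
  shows "i < Suc k \<Longrightarrow> poly_eval hom (a k) (if i = k then [:0, 1:] else [:v i:]) = a i"
  using assms by (auto simp: less_Suc_eq)

end

lemma vars_poly_eval:
  fixes hom :: "'a::comm_ring_1 \<Rightarrow> mpoly"
  assumes "comm_ring_hom hom" and "\<And>c. vars (hom c) \<subseteq> S" and "vars x \<subseteq> S"
  shows "vars (poly_eval hom x p) \<subseteq> S"
proof -
  have "poly_eval hom x p = (\<Sum>i\<le>degree (map_poly hom p). hom (coeff p i) * x ^ i)"
    by (simp add: poly_eval_def poly_altdef coeff_map_poly comm_ring_hom.hom_zero[OF assms(1)])
  also have "vars \<dots> \<subseteq> S"
    using assms(2) order_trans[OF vars_power assms(3)] by (intro vars_sum_subset vars_mult_subset) auto
  finally show ?thesis .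
qed

text \<open>Polynomials in \<open>x\<^sub>0, \<dots>, x\<^sub>k\<^sub>-\<^sub>1\<close> are represented as iterated univariate polynomials, with
  outermost variable \<open>x\<^sub>k\<^sub>-\<^sub>1\<close>, so that the factorial-ring theory of \<^typ>\<open>'a poly\<close> applies.\<close>

definition nest_eval1 :: "('a::comm_ring_1 \<Rightarrow> 'b::comm_ring_1) \<Rightarrow> (nat \<Rightarrow> 'b) \<Rightarrow> 'a poly \<Rightarrow> 'b" where
  "nest_eval1 hom a = poly_eval hom (a 0)"

definition nest_eval2 :: "('a::comm_ring_1 \<Rightarrow> 'b::comm_ring_1) \<Rightarrow> (nat \<Rightarrow> 'b) \<Rightarrow> 'a poly poly \<Rightarrow> 'b" where
  "nest_eval2 hom a = poly_eval (nest_eval1 hom a) (a 1)"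

definition nest_eval3 ::
    "('a::comm_ring_1 \<Rightarrow> 'b::comm_ring_1) \<Rightarrow> (nat \<Rightarrow> 'b) \<Rightarrow> 'a poly poly poly \<Rightarrow> 'b" where
  "nest_eval3 hom a = poly_eval (nest_eval2 hom a) (a 2)"

definition nest_eval4 ::
    "('a::comm_ring_1 \<Rightarrow> 'b::comm_ring_1) \<Rightarrow> (nat \<Rightarrow> 'b) \<Rightarrow> 'a poly poly poly poly \<Rightarrow> 'b" where
  "nest_eval4 hom a = poly_eval (nest_eval3 hom a) (a 3)"

definition nest_eval5 ::
    "('a::comm_ring_1 \<Rightarrow> 'b::comm_ring_1) \<Rightarrow> (nat \<Rightarrow> 'b) \<Rightarrow> 'a poly poly poly poly poly \<Rightarrow> 'b" where
  "nest_eval5 hom a = poly_eval (nest_eval4 hom a) (a 4)"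

definition nest_var1 :: "nat \<Rightarrow> 'a::comm_ring_1 poly" where
  "nest_var1 i = [:0, 1:]"

definition nest_var2 :: "nat \<Rightarrow> 'a::comm_ring_1 poly poly" where
  "nest_var2 i = (if i = 1 then [:0, 1:] else [:nest_var1 i:])"

definition nest_var3 :: "nat \<Rightarrow> 'a::comm_ring_1 poly poly poly" where
  "nest_var3 i = (if i = 2 then [:0, 1:] else [:nest_var2 i:])"

definition nest_var4 :: "nat \<Rightarrow> 'a::comm_ring_1 poly poly poly poly" where
  "nest_var4 i = (if i = 3 then [:0, 1:] else [:nest_var3 i:])"

definition nest_var5 :: "nat \<Rightarrow> 'a::comm_ring_1 poly poly poly poly poly" where
  "nest_var5 i = (if i = 4 then [:0, 1:] else [:nest_var4 i:])"

definition nest_const5 :: "'a::comm_ring_1 \<Rightarrow> 'a poly poly poly poly poly" where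
  "nest_const5 c = [:[:[:[:[:c:]:]:]:]:]"

context comm_ring_hom
begin

lemma comm_ring_hom_nest_eval1: "comm_ring_hom (nest_eval1 hom a)"
  unfolding nest_eval1_def by (rule comm_ring_hom_poly_eval)

lemma comm_ring_hom_nest_eval2: "comm_ring_hom (nest_eval2 hom a)"
  unfolding nest_eval2_def by (rule comm_ring_hom.comm_ring_hom_poly_eval[OF comm_ring_hom_nest_eval1])

lemma comm_ring_hom_nest_eval3: "comm_ring_hom (nest_eval3 hom a)"
  unfolding nest_eval3_def by (rule comm_ring_hom.comm_ring_hom_poly_eval[OF comm_ring_hom_nest_eval2])

lemma comm_ring_hom_nest_eval4: "comm_ring_hom (nest_eval4 hom a)"
  unfolding nest_eval4_def by (rule comm_ring_hom.comm_ring_hom_poly_eval[OF comm_ring_hom_nest_eval3])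

lemma comm_ring_hom_nest_eval5: "comm_ring_hom (nest_eval5 hom a)"
  unfolding nest_eval5_def by (rule comm_ring_hom.comm_ring_hom_poly_eval[OF comm_ring_hom_nest_eval4])

lemma nest_eval1_var: "i < 1 \<Longrightarrow> nest_eval1 hom a (nest_var1 i) = a i"
  by (simp add: nest_eval1_def nest_var1_def)

lemma nest_eval2_var: "i < 2 \<Longrightarrow> nest_eval2 hom a (nest_var2 i) = a i"
  unfolding nest_eval2_def nest_var2_def
  by (rule comm_ring_hom.poly_eval_lifted_var[OF comm_ring_hom_nest_eval1 nest_eval1_var]) auto

lemma nest_eval3_var: "i < 3 \<Longrightarrow> nest_eval3 hom a (nest_var3 i) = a i"
  unfolding nest_eval3_def nest_var3_def
  by (rule comm_ring_hom.poly_eval_lifted_var[OF comm_ring_hom_nest_eval2 nest_eval2_var]) auto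

lemma nest_eval4_var: "i < 4 \<Longrightarrow> nest_eval4 hom a (nest_var4 i) = a i"
  unfolding nest_eval4_def nest_var4_def
  by (rule comm_ring_hom.poly_eval_lifted_var[OF comm_ring_hom_nest_eval3 nest_eval3_var]) auto

lemma nest_eval5_var: "i < 5 \<Longrightarrow> nest_eval5 hom a (nest_var5 i) = a i"
  unfolding nest_eval5_def nest_var5_def
  by (rule comm_ring_hom.poly_eval_lifted_var[OF comm_ring_hom_nest_eval4 nest_eval4_var]) auto

lemma nest_eval5_const: "nest_eval5 hom a (nest_const5 c) = hom c"
proof -
  have "nest_eval5 hom a (nest_const5 c) = nest_eval4 hom a [:[:[:[:c:]:]:]:]"
    unfolding nest_eval5_def nest_const5_def by (rule comm_ring_hom.poly_eval_const[OF comm_ring_hom_nest_eval4])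
  also have "\<dots> = nest_eval3 hom a [:[:[:c:]:]:]"
    unfolding nest_eval4_def by (rule comm_ring_hom.poly_eval_const[OF comm_ring_hom_nest_eval3])
  also have "\<dots> = nest_eval2 hom a [:[:c:]:]"
    unfolding nest_eval3_def by (rule comm_ring_hom.poly_eval_const[OF comm_ring_hom_nest_eval2])
  also have "\<dots> = nest_eval1 hom a [:c:]"
    unfolding nest_eval2_def by (rule comm_ring_hom.poly_eval_const[OF comm_ring_hom_nest_eval1])
  finally show ?thesis
    by (simp add: nest_eval1_def)
qed

end

lemma comm_ring_hom_nest_const5: "comm_ring_hom nest_const5"
  unfolding nest_const5_def
  by (intro comm_ring_hom_comp[OF _ comm_ring_hom_const_poly] comm_ring_hom_const_poly)

lemma nest_eval5_cong: "(\<And>i. i < 5 \<Longrightarrow> a i = b i) \<Longrightarrow> nest_eval5 hom a = nest_eval5 hom b"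
  by (simp add: nest_eval5_def nest_eval4_def nest_eval3_def nest_eval2_def nest_eval1_def)

lemma vars_nest_eval5:
  fixes hom :: "'a::comm_ring_1 \<Rightarrow> mpoly"
  assumes hom: "comm_ring_hom hom" and "\<And>c. vars (hom c) \<subseteq> S" and "\<And>i. i < 5 \<Longrightarrow> vars (a i) \<subseteq> S"
  shows "vars (nest_eval5 hom a p) \<subseteq> S"
proof -
  have "vars (nest_eval1 hom a p) \<subseteq> S" for p
    unfolding nest_eval1_def using assms by (intro vars_poly_eval) auto
  then have "vars (nest_eval2 hom a p) \<subseteq> S" for p
    unfolding nest_eval2_def using assms
    by (intro vars_poly_eval comm_ring_hom.comm_ring_hom_nest_eval1[OF hom]) auto
  then have "vars (nest_eval3 hom a p) \<subseteq> S" for p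
    unfolding nest_eval3_def using assms
    by (intro vars_poly_eval comm_ring_hom.comm_ring_hom_nest_eval2[OF hom]) auto
  then have "vars (nest_eval4 hom a p) \<subseteq> S" for p
    unfolding nest_eval4_def using assms
    by (intro vars_poly_eval comm_ring_hom.comm_ring_hom_nest_eval3[OF hom]) auto
  then show ?thesis
    unfolding nest_eval5_def using assms
    by (intro vars_poly_eval comm_ring_hom.comm_ring_hom_nest_eval4[OF hom]) auto
qed

definition faithful_eval :: "nat \<Rightarrow> ((nat \<Rightarrow> 'a::zero) \<Rightarrow> 'p::zero \<Rightarrow> 'a) \<Rightarrow> bool" where
  "faithful_eval k E \<longleftrightarrow>
     (\<forall>a b. (\<forall>i<k. a i = b i) \<longrightarrow> E a = E b) \<and> (\<forall>p. (\<forall>a. E a p = 0) \<longrightarrow> p = 0)"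

lemma faithful_eval_poly_eval:
  fixes E :: "(nat \<Rightarrow> 'a::{ring_char_0,idom}) \<Rightarrow> 'p::comm_ring_1 \<Rightarrow> 'a"
  assumes faithful: "faithful_eval k E" and hom: "\<And>a. comm_ring_hom (E a)"
  shows "faithful_eval (Suc k) (\<lambda>a. poly_eval (E a) (a k))"
  unfolding faithful_eval_def
proof safe
  fix a b :: "nat \<Rightarrow> 'a" assume "\<forall>i<Suc k. a i = b i"
  with faithful show "poly_eval (E a) (a k) = poly_eval (E b) (b k)"
    unfolding faithful_eval_def by (metis less_Suc_eq)
next
  fix p assume vanish: "\<forall>a. poly_eval (E a) (a k) p = 0"
  show "p = 0"
  proof (rule ccontr)
    assume "p \<noteq> 0"
    then obtain a where a: "E a (lead_coeff p) \<noteq> 0"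
      using faithful unfolding faithful_eval_def by (metis leading_coeff_0_iff)
    have "coeff (map_poly (E a) p) (degree p) \<noteq> 0"
      using a by (simp add: coeff_map_poly comm_ring_hom.hom_zero[OF hom])
    then have "map_poly (E a) p \<noteq> 0"
      by auto
    then obtain x where x: "poly (map_poly (E a) p) x \<noteq> 0"
      using poly_all_0_iff_0 by blast
    have "E (a(k := x)) = E a"
      using faithful unfolding faithful_eval_def by simp
    moreover have "poly_eval (E (a(k := x))) ((a(k := x)) k) p = 0"
      using vanish by blast
    ultimately show False
      using x by (simp add: poly_eval_def)
  qed
qed

lemma faithful_eval_nest_eval4:
  "faithful_eval 4 (nest_eval4 (\<lambda>x. x) :: (nat \<Rightarrow> 'a::{ring_char_0,idom}) \<Rightarrow> _)"
proof -
  have "faithful_eval 0 (\<lambda>(a :: nat \<Rightarrow> 'a) x. x)"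
    by (simp add: faithful_eval_def)
  from faithful_eval_poly_eval[OF this comm_ring_hom_id]
  have "faithful_eval 1 (nest_eval1 (\<lambda>x. x) :: (nat \<Rightarrow> 'a) \<Rightarrow> _)"
    by (simp only: nest_eval1_def[abs_def] One_nat_def)
  from faithful_eval_poly_eval[OF this comm_ring_hom.comm_ring_hom_nest_eval1[OF comm_ring_hom_id]]
  have "faithful_eval 2 (nest_eval2 (\<lambda>x. x) :: (nat \<Rightarrow> 'a) \<Rightarrow> _)"
    by (simp only: nest_eval2_def[abs_def] Suc_1)
  from faithful_eval_poly_eval[OF this comm_ring_hom.comm_ring_hom_nest_eval2[OF comm_ring_hom_id]]
  have "faithful_eval 3 (nest_eval3 (\<lambda>x. x) :: (nat \<Rightarrow> 'a) \<Rightarrow> _)"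
    by (simp only: nest_eval3_def[abs_def] numeral_3_eq_3 numeral_2_eq_2)
  from faithful_eval_poly_eval[OF this comm_ring_hom.comm_ring_hom_nest_eval3[OF comm_ring_hom_id]]
  show ?thesis
    by (simp only: nest_eval4_def[abs_def] Suc_numeral semiring_norm)
qed

definition q_form :: "(nat \<Rightarrow> 'a::comm_ring_1) \<Rightarrow> 'a" where
  "q_form z = z 0 * z 3 - z 1 * z 2"

definition c_form :: "(nat \<Rightarrow> 'a::comm_ring_1) \<Rightarrow> 'a" where
  "c_form z = z 2 * (z 0 - z 1) * (z 1 - z 3)"

definition g_form :: "(nat \<Rightarrow> 'a::comm_ring_1) \<Rightarrow> 'a" where
  "g_form z = z 4 * q_form z + c_form z"

text \<open>The first three factors are the denominators of the chart \<open>zcoord_onto_chart\<close> below.\<close>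

definition d_form :: "(nat \<Rightarrow> 'a::comm_ring_1) \<Rightarrow> 'a" where
  "d_form z = (z 0 - z 2) * (z 1 - z 3) * (z 0 - z 2 - z 1 + z 3) * q_form z"

context comm_ring_hom
begin

lemma hom_q_form: "hom (q_form z) = q_form (\<lambda>i. hom (z i))"
  by (simp add: q_form_def hom_distribs)

lemma hom_c_form: "hom (c_form z) = c_form (\<lambda>i. hom (z i))"
  by (simp add: c_form_def hom_distribs)

lemma hom_g_form: "hom (g_form z) = g_form (\<lambda>i. hom (z i))"
  by (simp add: g_form_def hom_q_form hom_c_form hom_distribs)

lemma hom_d_form: "hom (d_form z) = d_form (\<lambda>i. hom (z i))"
  by (simp add: d_form_def hom_q_form hom_distribs)

end

lemma q_form_cong: "(\<And>i. i < 4 \<Longrightarrow> z i = w i) \<Longrightarrow> q_form z = q_form w"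
  by (simp add: q_form_def)

lemma c_form_cong: "(\<And>i. i < 4 \<Longrightarrow> z i = w i) \<Longrightarrow> c_form z = c_form w"
  by (simp add: c_form_def)

lemma d_form_cong: "(\<And>i. i < 4 \<Longrightarrow> z i = w i) \<Longrightarrow> d_form z = d_form w"
  by (simp add: d_form_def q_form_def)

lemma g_form_cong: "(\<And>i. i < 5 \<Longrightarrow> z i = w i) \<Longrightarrow> g_form z = g_form w"
  by (simp add: g_form_def q_form_def c_form_def)

lemma g_form_solve_last:
  fixes z :: "nat \<Rightarrow> 'a::field"
  assumes "q_form z \<noteq> 0"
  shows "g_form (z(4 := - c_form z / q_form z)) = 0"
proof -
  have "q_form (z(4 := - c_form z / q_form z)) = q_form z" "c_form (z(4 := - c_form z / q_form z)) = c_form z"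
    by (auto intro: q_form_cong c_form_cong)
  with assms show ?thesis
    by (simp add: g_form_def)
qed

context comm_ring_hom
begin

lemma nest_eval4_q_form: "nest_eval4 hom a (q_form nest_var4) = q_form a"
  by (simp add: comm_ring_hom.hom_q_form[OF comm_ring_hom_nest_eval4] nest_eval4_var cong: q_form_cong)

lemma nest_eval4_c_form: "nest_eval4 hom a (c_form nest_var4) = c_form a"
  by (simp add: comm_ring_hom.hom_c_form[OF comm_ring_hom_nest_eval4] nest_eval4_var cong: c_form_cong)

lemma nest_eval4_d_form: "nest_eval4 hom a (d_form nest_var4) = d_form a"
  by (simp add: comm_ring_hom.hom_d_form[OF comm_ring_hom_nest_eval4] nest_eval4_var cong: d_form_cong)

lemma nest_eval5_g_form: "nest_eval5 hom a (g_form nest_var5) = g_form a"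
  by (simp add: comm_ring_hom.hom_g_form[OF comm_ring_hom_nest_eval5] nest_eval5_var cong: g_form_cong)

end

lemma g_form_nest_var5: "g_form nest_var5 = [:c_form nest_var4, q_form nest_var4:]"
proof -
  have q: "q_form nest_var5 = [:q_form nest_var4:]"
    by (simp add: comm_ring_hom.hom_q_form[OF comm_ring_hom_const_poly] nest_var5_def cong: q_form_cong)
  have c: "c_form nest_var5 = [:c_form nest_var4:]"
    by (simp add: comm_ring_hom.hom_c_form[OF comm_ring_hom_const_poly] nest_var5_def cong: c_form_cong)
  show ?thesis
    unfolding g_form_def q c by (simp add: nest_var5_def)
qed

type_synonym cpoly4 = "complex poly poly poly poly"

lemma prime_elem_q_form_nest_var4: "prime_elem (q_form nest_var4 :: cpoly4)"
proof -
  have x0: "prime_elem (nest_var3 0 :: complex poly poly poly)"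
    by (simp add: nest_var3_def nest_var2_def nest_var1_def prime_elem_const_poly_iff prime_elem_linear_field_poly)
  have "\<not> nest_var3 0 dvd (nest_var3 1 * nest_var3 2 :: complex poly poly poly)"
  proof
    assume "nest_var3 0 dvd (nest_var3 1 * nest_var3 2 :: complex poly poly poly)"
    then obtain h where h: "nest_var3 1 * nest_var3 2 = nest_var3 0 * (h :: complex poly poly poly)" ..
    interpret e: comm_ring_hom "nest_eval3 (\<lambda>x. x) (\<lambda>i. if i = 0 then 0 else (1::complex))"
      by (rule comm_ring_hom.comm_ring_hom_nest_eval3[OF comm_ring_hom_id])
    from arg_cong[OF h, of "nest_eval3 (\<lambda>x. x) (\<lambda>i. if i = 0 then 0 else 1)"] show False
      by (simp add: e.hom_mult comm_ring_hom.nest_eval3_var[OF comm_ring_hom_id])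
  qed
  with x0 have "coprime (- (nest_var3 1 * nest_var3 2)) (nest_var3 0 :: complex poly poly poly)"
    by (metis prime_elem_imp_coprime coprime_commute coprime_minus_left_iff)
  moreover have "q_form nest_var4 = [:- (nest_var3 1 * nest_var3 2), nest_var3 0 :: complex poly poly poly:]"
    by (simp add: q_form_def nest_var4_def)
  ultimately show ?thesis
    using x0 by (simp add: prime_elem_linear_poly prime_elem_not_zeroI)
qed

lemma prime_elem_g_form_nest_var5: "prime_elem (g_form nest_var5 :: cpoly4 poly)"
proof -
  let ?Q = "q_form nest_var4 :: cpoly4"
  have Q: "prime_elem ?Q"
    by (rule prime_elem_q_form_nest_var4)
  have "\<not> ?Q dvd c_form nest_var4"
  proof
    assume "?Q dvd c_form nest_var4"
    then obtain h where h: "c_form nest_var4 = ?Q * h" ..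
    let ?a = "\<lambda>i::nat. [2, 1, 6, 3] ! i :: complex"
    interpret e: comm_ring_hom "nest_eval4 (\<lambda>x. x) ?a"
      by (rule comm_ring_hom.comm_ring_hom_nest_eval4[OF comm_ring_hom_id])
    from arg_cong[OF h, of "nest_eval4 (\<lambda>x. x) ?a"]
    have "c_form ?a = q_form ?a * nest_eval4 (\<lambda>x. x) ?a h"
      by (simp only: e.hom_mult comm_ring_hom.nest_eval4_q_form[OF comm_ring_hom_id]
          comm_ring_hom.nest_eval4_c_form[OF comm_ring_hom_id])
    then show False
      by (simp add: q_form_def c_form_def)
  qed
  with Q have "coprime (c_form nest_var4) ?Q"
    by (metis prime_elem_imp_coprime coprime_commute)
  then show ?thesis
    using Q by (simp add: g_form_nest_var5 prime_elem_linear_poly prime_elem_not_zeroI)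
qed

lemma d_form_nest_var4_nonzero: "d_form nest_var4 \<noteq> (0 :: cpoly4)"
proof -
  have "nest_eval4 (\<lambda>x. x) (\<lambda>i. [1, 0, 0, 2] ! i) (d_form nest_var4) \<noteq> (0 :: complex)"
    unfolding comm_ring_hom.nest_eval4_d_form[OF comm_ring_hom_id] by (simp add: d_form_def q_form_def)
  then show ?thesis
    by (metis comm_ring_hom.hom_zero[OF comm_ring_hom.comm_ring_hom_nest_eval4[OF comm_ring_hom_id]])
qed

lemma pseudo_divmod_degree_one:
  fixes g p :: "'a::idom poly"
  assumes "degree g = 1"
  obtains k s r where "smult (lead_coeff g ^ k) p = g * s + [:r:]"
proof -
  obtain s r where sr: "pseudo_divmod p g = (s, r)"
    by fastforce
  from assms have "g \<noteq> 0"
    by auto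
  from pseudo_divmod(2)[OF this sr] assms have "degree r = 0"
    by auto
  then have "r = [:coeff r 0:]"
    by (rule degree_0_id[symmetric])
  with pseudo_divmod(1)[OF \<open>g \<noteq> 0\<close> sr]
  have "smult (lead_coeff g ^ (Suc (degree p) - degree g)) p = g * s + [:coeff r 0:]"
    by simp
  then show ?thesis
    by (rule that)
qed

lemma prime_elem_dvd_const_power_mult:
  fixes g :: "'a::idom poly"
  assumes "g dvd [:c:] ^ k * p" and "prime_elem g" and "degree g \<noteq> 0" and "c \<noteq> 0"
  shows "g dvd p"
proof -
  have "\<not> g dvd [:c:] ^ k"
  proof
    assume "g dvd [:c:] ^ k"
    then have "g dvd [:c:]"
      using \<open>prime_elem g\<close> prime_elem_dvd_power by blast
    with \<open>c \<noteq> 0\<close> have "degree g \<le> degree [:c:]"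
      by (intro dvd_imp_degree_le) auto
    with \<open>degree g \<noteq> 0\<close> show False
      by simp
  qed
  with assms show ?thesis
    using prime_elem_dvd_mult_iff by blast
qed

text \<open>Where \<open>d_form \<noteq> 0\<close>, the equation \<open>g_form = 0\<close> can be solved for \<open>z\<^sub>4\<close>, so a pseudo-remainder
  modulo \<open>g_form\<close> of a polynomial vanishing on the hypersurface vanishes on a dense set.\<close>

lemma pseudo_remainder_g_form_eq_0:
  fixes p :: "cpoly4 poly"
  assumes vanish: "\<And>w. g_form w = 0 \<Longrightarrow> d_form w \<noteq> 0 \<Longrightarrow> nest_eval5 (\<lambda>x. x) w p = 0"
    and div: "smult (q_form nest_var4 ^ k) p = g_form nest_var5 * s + [:r:]"
  shows "r = 0"
proof -
  have "nest_eval4 (\<lambda>x. x) z r = 0" if "d_form z \<noteq> 0" for z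
  proof -
    define w where "w = z(4 := - c_form z / q_form z)"
    interpret e4: comm_ring_hom "nest_eval4 (\<lambda>x. x) w"
      by (rule comm_ring_hom.comm_ring_hom_nest_eval4[OF comm_ring_hom_id])
    interpret e5: comm_ring_hom "nest_eval5 (\<lambda>x. x) w"
      by (rule comm_ring_hom.comm_ring_hom_nest_eval5[OF comm_ring_hom_id])
    have "\<forall>i<4. w i = z i"
      by (simp add: w_def)
    then have eval4: "nest_eval4 (\<lambda>x. x) w = nest_eval4 (\<lambda>x. x) z"
      using faithful_eval_nest_eval4 unfolding faithful_eval_def by blast
    have "d_form w = d_form z"
      by (rule d_form_cong) (simp add: w_def)
    moreover have "g_form w = 0"
      using that g_form_solve_last[of z] unfolding w_def by (simp add: d_form_def)
    ultimately have "nest_eval5 (\<lambda>x. x) w p = 0"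
      using vanish that by simp
    moreover have "nest_eval5 (\<lambda>x. x) w (g_form nest_var5) = 0"
      using \<open>g_form w = 0\<close> comm_ring_hom.nest_eval5_g_form[OF comm_ring_hom_id, of w] by simp
    moreover have "nest_eval5 (\<lambda>x. x) w (smult (q_form nest_var4 ^ k) p) =
        nest_eval4 (\<lambda>x. x) w (q_form nest_var4 ^ k) * nest_eval5 (\<lambda>x. x) w p"
      unfolding nest_eval5_def by (rule e4.poly_eval_smult)
    moreover have "nest_eval5 (\<lambda>x. x) w [:r:] = nest_eval4 (\<lambda>x. x) w r"
      unfolding nest_eval5_def by (rule e4.poly_eval_const)
    ultimately show ?thesis
      using arg_cong[OF div, of "nest_eval5 (\<lambda>x. x) w"] eval4 by (simp add: e5.hom_add e5.hom_mult)
  qed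
  then have "nest_eval4 (\<lambda>x. x) z (r * d_form nest_var4) = 0" for z
    by (cases "d_form z = 0") (simp_all add: comm_ring_hom.hom_mult[OF comm_ring_hom.comm_ring_hom_nest_eval4]
        comm_ring_hom_id comm_ring_hom.nest_eval4_d_form[OF comm_ring_hom_id])
  then have "r * d_form nest_var4 = 0"
    using faithful_eval_nest_eval4 unfolding faithful_eval_def by blast
  then show "r = 0"
    using d_form_nest_var4_nonzero by simp
qed

lemma g_form_nest_var5_dvd:
  fixes p :: "cpoly4 poly"
  assumes "\<And>w. g_form w = 0 \<Longrightarrow> d_form w \<noteq> 0 \<Longrightarrow> nest_eval5 (\<lambda>x. x) w p = 0"
  shows "g_form nest_var5 dvd p"
proof -
  let ?G = "g_form nest_var5 :: cpoly4 poly" and ?Q = "q_form nest_var4 :: cpoly4"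
  have "?Q \<noteq> 0"
    using prime_elem_q_form_nest_var4 by auto
  then have deg: "degree ?G = 1" and lc: "lead_coeff ?G = ?Q"
    by (simp_all add: g_form_nest_var5)
  obtain k s r where div: "smult (?Q ^ k) p = ?G * s + [:r:]"
    by (rule pseudo_divmod_degree_one[OF deg, of p, unfolded lc])
  with assms have "r = 0"
    by (rule pseudo_remainder_g_form_eq_0)
  with div have "[:?Q:] ^ k * p = ?G * s"
    by (simp add: poly_const_pow)
  then have "?G dvd [:?Q:] ^ k * p"
    by simp
  then show ?thesis
    by (rule prime_elem_dvd_const_power_mult) (simp_all add: prime_elem_g_form_nest_var5 deg \<open>?Q \<noteq> 0\<close>)
qed

definition pminor :: "(nat \<Rightarrow> nat \<Rightarrow> complex) \<Rightarrow> nat \<Rightarrow> nat \<Rightarrow> complex" where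
  "pminor M i j = M 0 i * M 1 j - M 0 j * M 1 i"

lemma plucker_pairs_eq:
  "plucker_pairs = [(0,1), (0,2), (0,3), (0,4), (0,5), (1,2), (1,3), (1,4), (1,5), (2,3), (2,4), (2,5),
    (3,4), (3,5), (4,5)]"
  by (simp add: plucker_pairs_def upt_rec)

lemma pl_eq_pminor: "pl M k = pminor M (fst (plucker_pairs ! k)) (snd (plucker_pairs ! k))"
  by (simp add: pl_def pminor_def split: prod.splits)

lemma plucker_relation: "pminor M i j * pminor M k l - pminor M i k * pminor M j l + pminor M i l * pminor M j k = 0"
  unfolding pminor_def by algebra

definition zcoord :: "(nat \<Rightarrow> nat \<Rightarrow> complex) \<Rightarrow> nat \<Rightarrow> complex" where
  "zcoord M j =
    [pminor M 0 4 * pminor M 1 3 * pminor M 2 5, pminor M 0 5 * pminor M 1 3 * pminor M 2 4,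
     pminor M 0 4 * pminor M 1 2 * pminor M 3 5, pminor M 0 5 * pminor M 1 2 * pminor M 3 4,
     pminor M 0 2 * pminor M 1 4 * pminor M 3 5] ! j"

lemma g_form_zcoord: "g_form (zcoord M) = 0"
proof -
  let ?p = "pminor M"
  have r1: "?p 2 5 * ?p 3 4 - ?p 2 4 * ?p 3 5 = - (?p 2 3 * ?p 4 5)"
    using plucker_relation[of M 2 3 4 5] by (simp add: algebra_simps)
  have r2: "?p 0 4 * ?p 2 5 - ?p 0 5 * ?p 2 4 = ?p 0 2 * ?p 4 5"
    using plucker_relation[of M 0 2 4 5] by (simp add: algebra_simps)
  have r3: "?p 1 3 * ?p 2 4 - ?p 1 2 * ?p 3 4 = ?p 1 4 * ?p 2 3"
    using plucker_relation[of M 1 2 3 4] by (simp add: algebra_simps)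
  have q: "q_form (zcoord M) = ?p 0 4 * ?p 0 5 * ?p 1 2 * ?p 1 3 * (?p 2 5 * ?p 3 4 - ?p 2 4 * ?p 3 5)"
    and c01: "zcoord M 0 - zcoord M 1 = ?p 1 3 * (?p 0 4 * ?p 2 5 - ?p 0 5 * ?p 2 4)"
    and c13: "zcoord M 1 - zcoord M 3 = ?p 0 5 * (?p 1 3 * ?p 2 4 - ?p 1 2 * ?p 3 4)"
    by (simp_all add: q_form_def zcoord_def algebra_simps)
  have "g_form (zcoord M) =
      zcoord M 4 * q_form (zcoord M) + zcoord M 2 * (zcoord M 0 - zcoord M 1) * (zcoord M 1 - zcoord M 3)"
    by (simp add: g_form_def c_form_def)
  also have "\<dots> = zcoord M 4 * (?p 0 4 * ?p 0 5 * ?p 1 2 * ?p 1 3 * - (?p 2 3 * ?p 4 5))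
      + zcoord M 2 * (?p 1 3 * (?p 0 2 * ?p 4 5)) * (?p 0 5 * (?p 1 4 * ?p 2 3))"
    by (simp only: q c01 c13 r1 r2 r3)
  also have "\<dots> = 0"
    by (simp add: zcoord_def algebra_simps)
  finally show ?thesis .
qed

definition chart_matrix :: "complex \<Rightarrow> complex \<Rightarrow> complex \<Rightarrow> complex \<Rightarrow> complex \<Rightarrow> nat \<Rightarrow> nat \<Rightarrow> complex" where
  "chart_matrix l t2 t3 t4 t5 r c = (if r = 0 then [l, 0, 1, 1, 1, 1] ! c else [0, 1, t2, t3, t4, t5] ! c)"

lemma zcoord_chart_matrix:
  "j < 5 \<Longrightarrow> zcoord (chart_matrix l t2 t3 t4 t5) j =
    [l * t4 * (t2 - t5), l * t5 * (t2 - t4), l * t4 * (t3 - t5), l * t5 * (t3 - t4), l * t2 * (t3 - t5)] ! j"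
  by (auto simp: less_Suc_eq numeral_eq_Suc zcoord_def pminor_def chart_matrix_def algebra_simps)

text \<open>With \<open>u = l t\<^sub>2\<close>, \<open>v = l t\<^sub>3\<close> and \<open>w = l t\<^sub>5\<close>, the first four coordinates of
  \<open>chart_matrix l t\<^sub>2 t\<^sub>3 1 t\<^sub>5\<close> are \<open>u - w, t\<^sub>5 u - w, v - w, t\<^sub>5 v - w\<close>; these equations are solved
  successively for \<open>t\<^sub>5\<close>, \<open>w\<close>, \<open>u\<close> and \<open>v\<close>.\<close>

lemma zcoord_onto_chart:
  assumes "d_form z \<noteq> 0"
  shows "\<exists>M. \<forall>j<4. zcoord M j = z j"
proof -
  have n02: "z 0 - z 2 \<noteq> 0" and n13: "z 1 - z 3 \<noteq> 0" and n: "z 0 - z 2 - z 1 + z 3 \<noteq> 0"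
    and q: "z 0 * z 3 - z 1 * z 2 \<noteq> 0"
    using assms by (auto simp: d_form_def q_form_def)
  define t5 where "t5 = (z 1 - z 3) / (z 0 - z 2)"
  define w where "w = (z 1 - t5 * z 0) / (t5 - 1)"
  have t5: "t5 * (z 0 - z 2) = z 1 - z 3" and "t5 \<noteq> 0"
    using n02 n13 by (simp_all add: t5_def)
  have "t5 \<noteq> 1"
    using t5 n by (auto simp: algebra_simps)
  then have w: "w * (t5 - 1) = z 1 - t5 * z 0"
    by (simp add: w_def)
  have "w \<noteq> 0"
  proof
    assume "w = 0"
    with w have "z 1 * (z 0 - z 2) = (z 1 - z 3) * z 0"
      by (metis t5 mult.commute mult.left_commute mult_zero_left right_minus_eq)
    with q show False
      by (simp add: algebra_simps)
  qed
  define l where "l = w / t5"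
  have l: "l * t5 = w" and "l \<noteq> 0"
    using \<open>t5 \<noteq> 0\<close> \<open>w \<noteq> 0\<close> by (simp_all add: l_def)
  let ?M = "chart_matrix l ((z 0 + w) / l) ((z 2 + w) / l) 1 t5"
  have "zcoord ?M j = z j" if "j < 4" for j
  proof -
    have "t5 * (z 0 + w) - w = z 1" and "t5 * (z 2 + w) - w = z 3"
      using w t5 by algebra+
    with that l \<open>l \<noteq> 0\<close> show ?thesis
      by (auto simp: zcoord_chart_matrix less_Suc_eq numeral_eq_Suc algebra_simps)
  qed
  then show ?thesis
    by blast
qed

lemma zcoord_onto_hypersurface:
  assumes "g_form w = 0" and "d_form w \<noteq> 0"
  shows "\<exists>M. \<forall>j<5. zcoord M j = w j"
proof -
  obtain M where M: "\<forall>j<4. zcoord M j = w j"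
    using zcoord_onto_chart \<open>d_form w \<noteq> 0\<close> by blast
  then have "q_form (zcoord M) = q_form w" "c_form (zcoord M) = c_form w"
    by (simp_all add: q_form_def c_form_def)
  moreover have "q_form w \<noteq> 0"
    using \<open>d_form w \<noteq> 0\<close> by (simp add: d_form_def)
  ultimately have "zcoord M 4 * q_form w + c_form w = w 4 * q_form w + c_form w" and "q_form w \<noteq> 0"
    using g_form_zcoord[of M] \<open>g_form w = 0\<close> by (simp_all add: g_form_def)
  then have "zcoord M 4 = w 4"
    by simp
  with M have "\<forall>j<5. zcoord M j = w j"
    by (auto dest!: nat_less_5_cases)
  then show ?thesis
    by blast
qed

lemma g_form_nest_var5_dvd_if_vanishes_on_zcoord:
  assumes "\<And>M. nest_eval5 (\<lambda>x. x) (zcoord M) p = 0"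
  shows "g_form nest_var5 dvd p"
proof (rule g_form_nest_var5_dvd)
  fix w :: "nat \<Rightarrow> complex"
  assume "g_form w = 0" and "d_form w \<noteq> 0"
  then obtain M where "\<forall>j<5. zcoord M j = w j"
    using zcoord_onto_hypersurface by blast
  then have "nest_eval5 (\<lambda>x. x) w = nest_eval5 (\<lambda>x. x) (zcoord M)"
    by (intro nest_eval5_cong) simp
  with assms show "nest_eval5 (\<lambda>x. x) w p = 0"
    by simp
qed

lemma pminor_colscale: "pminor (colscale M t) i j = t i * t j * pminor M i j"
  by (simp add: pminor_def colscale_def algebra_simps)

lemma zcoord_colscale:
  assumes "torus t" and "j < 5"
  shows "zcoord (colscale M t) j = zcoord M j"
proof -
  have "zcoord (colscale M t) j = (\<Prod>i<6. t i) * zcoord M j"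
    using \<open>j < 5\<close> by (auto simp: less_Suc_eq numeral_eq_Suc zcoord_def pminor_colscale algebra_simps)
  with assms show ?thesis
    by (simp add: torus_def)
qed

definition zcoord_indices :: "(nat \<times> nat \<times> nat) list" where
  "zcoord_indices = [(3, 6, 11), (4, 6, 10), (3, 5, 13), (4, 5, 12), (1, 7, 13)]"

lemma zcoord_pl_product:
  "j < 5 \<Longrightarrow> zcoord M j = (case zcoord_indices ! j of (a, b, c) \<Rightarrow> pl M a * pl M b * pl M c)"
  by (drule nat_less_5_cases) (auto simp: zcoord_def zcoord_indices_def pl_eq_pminor plucker_pairs_eq)

lemma zcoord_in_inv_sections: "j < 5 \<Longrightarrow> (\<lambda>M. zcoord M j) \<in> inv_sections 1"
proof -
  assume "j < 5"
  obtain a b c where abc: "zcoord_indices ! j = (a, b, c)"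
    by (metis prod_cases3)
  with \<open>j < 5\<close> have "a < 15" "b < 15" "c < 15"
    by (auto simp: zcoord_indices_def less_Suc_eq numeral_eq_Suc)
  define f :: mpoly where "f = mvar a * mvar b * mvar c"
  have "vars f \<subseteq> {..<15}"
    unfolding f_def using \<open>a < 15\<close> \<open>b < 15\<close> \<open>c < 15\<close> by (intro vars_mult_subset) auto
  moreover have "homog (3 * 1) f"
    using homog_mult[OF homog_mult[OF homog_mvar homog_mvar] homog_mvar] by (simp add: f_def numeral_3_eq_3)
  moreover have "zcoord M j = meval (pl M) f" for M
    using zcoord_pl_product[OF \<open>j < 5\<close>, of M] abc
    by (simp add: f_def meval_eq_mpoly_eval comm_ring_hom.mpoly_eval_mvar[OF comm_ring_hom_id]
        comm_ring_hom.hom_mult[OF comm_ring_hom.comm_ring_hom_mpoly_eval[OF comm_ring_hom_id]])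
  ultimately show ?thesis
    unfolding inv_sections_def using zcoord_colscale \<open>j < 5\<close> by blast
qed

lemma zcoord_linear_independent:
  assumes "\<forall>M. (\<Sum>j<5. c j * zcoord M j) = 0"
  shows "\<forall>j<5. c j = 0"
proof -
  have e: "c 0 * zcoord M 0 + c 1 * zcoord M 1 + c 2 * zcoord M 2 + c 3 * zcoord M 3 + c 4 * zcoord M 4 = 0" for M
    using spec[OF assms, of M] by (simp add: sum_lessThan_5)
  have "c 4 = 0"
    using e[of "chart_matrix 1 1 1 0 0"] by (simp add: zcoord_chart_matrix)
  moreover have "c 1 = 0"
    using e[of "chart_matrix 1 1 0 0 1"] \<open>c 4 = 0\<close> by (simp add: zcoord_chart_matrix)
  moreover have "c 3 = 0"
    using e[of "chart_matrix 1 0 1 0 1"] by (simp add: zcoord_chart_matrix)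
  moreover have "c 0 = 0"
    using e[of "chart_matrix 1 1 0 1 0"] by (simp add: zcoord_chart_matrix)
  moreover have "c 2 = 0"
    using e[of "chart_matrix 1 0 1 1 0"] by (simp add: zcoord_chart_matrix)
  ultimately show ?thesis
    by (auto simp: less_Suc_eq numeral_eq_Suc)
qed

definition root_exp :: "nat \<Rightarrow> nat \<Rightarrow> nat" where
  "root_exp i j = (if j = i then 1 else if j = 5 then 3 else 0)"

definition pair_weight :: "nat \<Rightarrow> nat \<Rightarrow> nat" where
  "pair_weight i k = root_exp i (fst (plucker_pairs ! k)) + root_exp i (snd (plucker_pairs ! k))"

text \<open>Each perfect matching of \<open>{0, \<dots>, 5}\<close>, as a sorted triple of indices into
  \<^const>\<open>plucker_pairs\<close>, with the coordinates of its Plucker monomial with respect to \<^const>\<open>zcoord\<close>.\<close>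

definition matching_expansions :: "((nat \<times> nat \<times> nat) \<times> complex list) list" where
  "matching_expansions =
    [((0, 9, 14), [1, -1, -1, 1, 0]), ((0, 10, 13), [0, 0, -1, 0, 1]), ((0, 11, 12), [-1, 1, 0, -1, 1]),
     ((1, 6, 14), [1, -1, 0, 0, 0]), ((1, 7, 13), [0, 0, 0, 0, 1]), ((1, 8, 12), [-1, 1, 0, 0, 1]),
     ((2, 5, 14), [0, 0, 1, -1, 0]), ((2, 7, 11), [0, 1, 0, -1, 1]), ((2, 8, 10), [0, 1, -1, 0, 1]),
     ((3, 5, 13), [0, 0, 1, 0, 0]), ((3, 6, 11), [1, 0, 0, 0, 0]), ((3, 8, 9), [1, 0, -1, 0, 0]),
     ((4, 5, 12), [0, 0, 0, 1, 0]), ((4, 6, 10), [0, 1, 0, 0, 0]), ((4, 7, 9), [0, 1, 0, -1, 0])]"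

lemma balanced_triple_is_matching:
  assumes "a \<le> b" and "b \<le> c" and "c < 15"
    and "\<forall>i<5. 4 dvd pair_weight i a + pair_weight i b + pair_weight i c"
  shows "(a, b, c) \<in> set (map fst matching_expansions)"
proof -
  have "list_all (\<lambda>a. list_all (\<lambda>b. list_all (\<lambda>c.
      list_all (\<lambda>i. 4 dvd pair_weight i a + pair_weight i b + pair_weight i c) [0..<5] \<longrightarrow>
      (a, b, c) \<in> set (map fst matching_expansions)) [b..<15]) [a..<15]) [0..<15]"
    by code_simp
  from this[unfolded list_all_iff set_upt, rule_format] show ?thesis
    using assms by (auto simp: atLeast0LessThan)
qed

lemma matching_expansions_correct:
  "list_all (\<lambda>((a, b, c), e). \<forall>M. pl M a * pl M b * pl M c = (\<Sum>j<5. e ! j * zcoord M j))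
    matching_expansions"
  unfolding matching_expansions_def sum_lessThan_5
  by (simp only: list.pred_inject prod.case, intro conjI allI TrueI;
      simp add: pl_eq_pminor plucker_pairs_eq zcoord_def; unfold pminor_def; algebra)

lemma balanced_cubic_monom_in_span:
  assumes keys: "Poly_Mapping.keys \<mu> \<subseteq> {..<15}" and deg: "tdeg \<mu> = 3"
    and balanced: "\<forall>i<5. 4 dvd monom_weight (pair_weight i) \<mu>"
  shows "\<exists>e. \<forall>M. monom_eval (pl M) \<mu> = (\<Sum>j<5. e j * zcoord M j)"
proof -
  let ?ks = "monom_vars_list \<mu>"
  have \<mu>: "\<mu> = (\<Sum>k\<leftarrow>?ks. Poly_Mapping.single k 1)"
    by (rule sum_list_monom_vars_list[symmetric])
  have "length ?ks = 3"
    using deg by (simp add: length_monom_vars_list)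
  then obtain a b c where ks: "?ks = [a, b, c]"
    by (auto simp: numeral_3_eq_3 length_Suc_conv)
  have "a \<le> b" "b \<le> c"
    using sorted_monom_vars_list[of \<mu>] by (simp_all add: ks)
  moreover have "c < 15"
    using set_monom_vars_list[of \<mu>] keys by (auto simp: ks)
  moreover have "\<forall>i<5. 4 dvd pair_weight i a + pair_weight i b + pair_weight i c"
    using balanced monom_weight_sum_list_single[of _ ?ks, folded \<mu>] by (simp add: ks add.assoc)
  ultimately have "(a, b, c) \<in> set (map fst matching_expansions)"
    by (rule balanced_triple_is_matching)
  then obtain e where "((a, b, c), e) \<in> set matching_expansions"
    by auto
  then have "pl M a * pl M b * pl M c = (\<Sum>j<5. e ! j * zcoord M j)" for M
    using matching_expansions_correct by (fastforce simp: list_all_iff)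
  then have "monom_eval (pl M) \<mu> = (\<Sum>j<5. e ! j * zcoord M j)" for M
    using monom_eval_sum_list_single[of "pl M" ?ks, folded \<mu>] by (simp add: ks mult.assoc)
  then show ?thesis
    by blast
qed

lemma imag_unit_power_mod: "\<i> ^ n = \<i> ^ (n mod 4)"
proof -
  have "\<i> ^ n = \<i> ^ (4 * (n div 4) + n mod 4)"
    by simp
  also have "\<dots> = (\<i> ^ 4) ^ (n div 4) * \<i> ^ (n mod 4)"
    by (simp only: power_add power_mult)
  also have "\<i> ^ 4 = 1"
    using i_even_power[of 2] by simp
  finally show ?thesis
    by simp
qed

lemma sum_powers_imag_unit: "(\<Sum>r<4. \<i> ^ (r * n)) = (if 4 dvd n then 4 else (0::complex))"
proof -
  define x where "x = \<i> ^ (n mod 4)"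
  have "\<i> ^ (r * n) = x ^ r" for r
    by (metis x_def imag_unit_power_mod mult.commute power_mult)
  then have sum: "(\<Sum>r<4. \<i> ^ (r * n)) = 1 + x + x * x + x * x * x"
    by (simp add: eval_nat_numeral sum.lessThan_Suc)
  have "n mod 4 = 0 \<or> n mod 4 = 1 \<or> n mod 4 = 2 \<or> n mod 4 = 3"
    by arith
  then show ?thesis
  proof (elim disjE)
    assume "n mod 4 = 0"
    then show ?thesis
      using sum by (simp add: x_def dvd_eq_mod_eq_0)
  next
    assume "n mod 4 = 1"
    then show ?thesis
      using sum by (simp add: x_def dvd_eq_mod_eq_0)
  next
    assume "n mod 4 = 2"
    then show ?thesis
      using sum by (simp add: x_def dvd_eq_mod_eq_0 power2_eq_square)
  next
    assume "n mod 4 = 3"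
    then show ?thesis
      using sum by (simp add: x_def dvd_eq_mod_eq_0 power3_eq_cube)
  qed
qed

text \<open>For \<open>i < 5\<close>, \<open>root_torus i r\<close> scales column \<open>i\<close> by \<open>\<i>\<^sup>r\<close> and column \<open>5\<close> by \<open>\<i>\<^sup>3\<^sup>r\<close>, hence
  multiplies a Plucker monomial by \<open>\<i>\<^sup>r\<^sup>w\<close> for its weight \<open>w\<close>; averaging over \<open>r < 4\<close> keeps exactly
  the monomials with \<open>4 dvd w\<close>.\<close>

definition root_torus :: "nat \<Rightarrow> nat \<Rightarrow> nat \<Rightarrow> complex" where
  "root_torus i r j = \<i> ^ (r * root_exp i j)"

lemma torus_root_torus: "i < 5 \<Longrightarrow> torus (root_torus i r)"
proof -
  assume "i < 5"
  then have "(\<Sum>j<6. root_exp i j) = 4"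
    by (auto simp: root_exp_def eval_nat_numeral sum.lessThan_Suc)
  then have "(\<Prod>j<6. root_torus i r j) = \<i> ^ (4 * r)"
    by (simp add: root_torus_def mult.commute flip: power_sum sum_distrib_left)
  also have "\<dots> = 1"
    using i_even_power[of 2] by simp
  finally show ?thesis
    by (simp add: torus_def root_torus_def)
qed

lemma pl_colscale: "pl (colscale M t) k = t (fst (plucker_pairs ! k)) * t (snd (plucker_pairs ! k)) * pl M k"
  by (simp add: pl_eq_pminor pminor_colscale)

lemma monom_eval_pl_root_torus:
  "monom_eval (pl (colscale M (root_torus i r))) \<mu> =
    \<i> ^ (r * monom_weight (pair_weight i) \<mu>) * monom_eval (pl M) \<mu>"
proof -
  have scale: "pl (colscale M (root_torus i r)) = (\<lambda>k. (\<i> ^ r) ^ pair_weight i k * pl M k)"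
    by (simp add: fun_eq_iff pl_colscale root_torus_def pair_weight_def power_add flip: power_mult)
  show ?thesis
    unfolding scale monom_eval_mult monom_eval_power_weight by (simp add: power_mult)
qed

lemma root_torus_filter:
  assumes inv: "\<And>t M. torus t \<Longrightarrow> F (colscale M t) = F M"
    and rep: "\<And>M. F M = (\<Sum>\<mu>\<in>K. d \<mu> * monom_eval (pl M) \<mu>)" and "i < 5"
  shows "F M = (\<Sum>\<mu>\<in>K. (if 4 dvd monom_weight (pair_weight i) \<mu> then d \<mu> else 0) * monom_eval (pl M) \<mu>)"
proof -
  have "4 * F M = (\<Sum>r<4. F (colscale M (root_torus i r)))"
    using inv[OF torus_root_torus[OF \<open>i < 5\<close>]] by simp
  also have "\<dots> = (\<Sum>r<4. \<Sum>\<mu>\<in>K. d \<mu> * (\<i> ^ (r * monom_weight (pair_weight i) \<mu>) * monom_eval (pl M) \<mu>))"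
    by (simp add: rep monom_eval_pl_root_torus)
  also have "\<dots> = (\<Sum>\<mu>\<in>K. d \<mu> * monom_eval (pl M) \<mu> * (\<Sum>r<4. \<i> ^ (r * monom_weight (pair_weight i) \<mu>)))"
    by (subst sum.swap) (simp add: sum_distrib_left mult_ac)
  also have "\<dots> = (\<Sum>\<mu>\<in>K. 4 * ((if 4 dvd monom_weight (pair_weight i) \<mu> then d \<mu> else 0) * monom_eval (pl M) \<mu>))"
    by (intro sum.cong) (simp_all add: sum_powers_imag_unit)
  also have "\<dots> = 4 * (\<Sum>\<mu>\<in>K. (if 4 dvd monom_weight (pair_weight i) \<mu> then d \<mu> else 0) * monom_eval (pl M) \<mu>)"
    by (simp add: sum_powers_imag_unit sum_distrib_left)
  finally show ?thesis
    by simp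
qed

lemma root_torus_filter_all:
  assumes inv: "\<And>t M. torus t \<Longrightarrow> F (colscale M t) = F M"
    and rep: "\<And>M. F M = (\<Sum>\<mu>\<in>K. d \<mu> * monom_eval (pl M) \<mu>)"
  shows "F M = (\<Sum>\<mu>\<in>K. (if \<forall>i<5. 4 dvd monom_weight (pair_weight i) \<mu> then d \<mu> else 0) *
    monom_eval (pl M) \<mu>)"
proof -
  let ?bal = "\<lambda>k \<mu>. \<forall>i<k. 4 dvd monom_weight (pair_weight i) \<mu>"
  have "F M = (\<Sum>\<mu>\<in>K. (if ?bal k \<mu> then d \<mu> else 0) * monom_eval (pl M) \<mu>)" if "k \<le> 5" for k
    using that
  proof (induction k arbitrary: M)
    case 0
    then show ?case
      by (simp add: rep)
  next
    case (Suc k)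
    then have "F M = (\<Sum>\<mu>\<in>K. (if 4 dvd monom_weight (pair_weight k) \<mu> then
        (if ?bal k \<mu> then d \<mu> else 0) else 0) * monom_eval (pl M) \<mu>)"
      by (intro root_torus_filter[OF inv]) simp_all
    also have "\<dots> = (\<Sum>\<mu>\<in>K. (if ?bal (Suc k) \<mu> then d \<mu> else 0) * monom_eval (pl M) \<mu>)"
      by (intro sum.cong) (auto simp: less_Suc_eq)
    finally show ?case .
  qed
  then show ?thesis
    by simp
qed

lemma inv_section_in_span:
  assumes "F \<in> inv_sections 1"
  shows "\<exists>c. F = (\<lambda>M. \<Sum>j<5. c j * zcoord M j)"
proof -
  obtain f where vars: "vars f \<subseteq> {..<15}" and deg: "homog 3 f" and F: "F = (\<lambda>M. meval (pl M) f)"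
    and inv: "\<And>t M. torus t \<Longrightarrow> F (colscale M t) = F M"
    using assms unfolding inv_sections_def by auto
  let ?K = "Poly_Mapping.keys f"
  have rep: "F M = (\<Sum>\<mu>\<in>?K. Poly_Mapping.lookup f \<mu> * monom_eval (pl M) \<mu>)" for M
    by (simp add: F meval_eq_mpoly_eval mpoly_eval_def)
  let ?bal = "\<lambda>\<mu>. \<forall>i<5. 4 dvd monom_weight (pair_weight i) \<mu>"
  have "\<exists>e. \<mu> \<in> ?K \<and> ?bal \<mu> \<longrightarrow> (\<forall>M. monom_eval (pl M) \<mu> = (\<Sum>j<5. e j * zcoord M j))" for \<mu>
    using balanced_cubic_monom_in_span[of \<mu>] vars deg unfolding vars_def homog_def by blast
  then obtain E where E: "\<And>\<mu> M. \<mu> \<in> ?K \<Longrightarrow> ?bal \<mu> \<Longrightarrow> monom_eval (pl M) \<mu> = (\<Sum>j<5. E \<mu> j * zcoord M j)"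
    by metis
  have "F M = (\<Sum>j<5. (\<Sum>\<mu>\<in>?K. (if ?bal \<mu> then Poly_Mapping.lookup f \<mu> else 0) * E \<mu> j) * zcoord M j)" for M
  proof -
    have "F M = (\<Sum>\<mu>\<in>?K. (if ?bal \<mu> then Poly_Mapping.lookup f \<mu> else 0) * monom_eval (pl M) \<mu>)"
      by (rule root_torus_filter_all[OF inv rep])
    also have "\<dots> = (\<Sum>\<mu>\<in>?K. (if ?bal \<mu> then Poly_Mapping.lookup f \<mu> else 0) * (\<Sum>j<5. E \<mu> j * zcoord M j))"
      by (intro sum.cong) (simp_all add: E)
    also have "\<dots> = (\<Sum>j<5. (\<Sum>\<mu>\<in>?K. (if ?bal \<mu> then Poly_Mapping.lookup f \<mu> else 0) * E \<mu> j) * zcoord M j)"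
      by (simp add: sum_distrib_left sum_distrib_right mult_ac sum.swap[of _ ?K])
    finally show ?thesis .
  qed
  then show ?thesis
    by (intro exI ext)
qed

lemma change_of_basis_inverse:
  fixes u :: "nat \<Rightarrow> 'x \<Rightarrow> 'a::field"
  assumes indep: "\<And>c. \<forall>x. (\<Sum>k<n. c k * u k x) = 0 \<Longrightarrow> \<forall>k<n. c k = 0"
    and u_v: "\<And>k x. k < n \<Longrightarrow> u k x = (\<Sum>j<m. A k j * v j x)"
    and v_u: "\<And>j x. j < m \<Longrightarrow> v j x = (\<Sum>l<n. B j l * u l x)"
    and "k < n" and "l < n"
  shows "(\<Sum>j<m. A k j * B j l) = (if k = l then 1 else 0)"
proof -
  define c where "c l' = (\<Sum>j<m. A k j * B j l') - (if k = l' then 1 else 0)" for l'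
  have "(\<Sum>l'<n. c l' * u l' x) = 0" for x
  proof -
    have "(\<Sum>l'<n. (\<Sum>j<m. A k j * B j l') * u l' x) = (\<Sum>j<m. A k j * v j x)"
      by (simp add: v_u sum_distrib_left sum_distrib_right mult_ac sum.swap[of _ "{..<n}"])
    also have "\<dots> = u k x"
      using u_v \<open>k < n\<close> by simp
    moreover have "(\<Sum>l'<n. (if k = l' then 1 else 0) * u l' x) = u k x"
      using \<open>k < n\<close> by (simp add: sum_delta_mult)
    ultimately show ?thesis
      by (simp add: c_def left_diff_distrib sum_subtractf)
  qed
  then have "c l = 0"
    using indep \<open>l < n\<close> by blast
  then show ?thesis
    by (simp add: c_def)
qed

lemma gen_ideal_single: "gen_ideal N [g] = {h * g | h. vars h \<subseteq> {..<N}}"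
proof (intro set_eqI iffI)
  fix x
  assume "x \<in> gen_ideal N [g]"
  then show "x \<in> {h * g | h. vars h \<subseteq> {..<N}}"
    by (auto simp: gen_ideal_def)
next
  fix x
  assume "x \<in> {h * g | h. vars h \<subseteq> {..<N}}"
  then obtain h where "x = h * g" and "vars h \<subseteq> {..<N}"
    by blast
  then show "x \<in> gen_ideal N [g]"
    unfolding gen_ideal_def by (auto intro!: exI[of _ "\<lambda>_. h"])
qed

lemma gen_ideal_Nil: "gen_ideal N [] = {0}"
  unfolding gen_ideal_def by simp

locale deg1_basis_change =
  fixes fs :: "((nat \<Rightarrow> nat \<Rightarrow> complex) \<Rightarrow> complex) list" and A B :: "nat \<Rightarrow> nat \<Rightarrow> complex"
  assumes fs_zcoord: "\<And>k M. k < length fs \<Longrightarrow> (fs ! k) M = (\<Sum>j<5. A k j * zcoord M j)"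
    and zcoord_fs: "\<And>j M. j < 5 \<Longrightarrow> zcoord M j = (\<Sum>k<length fs. B j k * (fs ! k) M)"
    and AB: "\<And>k l. k < length fs \<Longrightarrow> l < length fs \<Longrightarrow> (\<Sum>j<5. A k j * B j l) = (if k = l then 1 else 0)"
    and BA: "\<And>i j. i < 5 \<Longrightarrow> j < 5 \<Longrightarrow> (\<Sum>k<length fs. B i k * A k j) = (if i = j then 1 else 0)"
begin

definition zlin :: "nat \<Rightarrow> mpoly" where
  "zlin j = (\<Sum>k<length fs. mconst (B j k) * mvar k)"

definition cubic_rel :: mpoly where
  "cubic_rel = g_form zlin"

interpretation eval: comm_ring_hom "mpoly_eval (\<lambda>x. x) a" for a
  by (rule comm_ring_hom.comm_ring_hom_mpoly_eval[OF comm_ring_hom_id])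

lemma vars_zlin: "vars (zlin j) \<subseteq> {..<length fs}"
  unfolding zlin_def by (intro vars_sum_subset vars_mult_subset) auto

lemma vars_cubic_rel: "vars cubic_rel \<subseteq> {..<length fs}"
  unfolding cubic_rel_def g_form_def q_form_def c_form_def
  by (intro vars_add_subset vars_mult_subset vars_diff_subset vars_zlin)

lemma homog_cubic_rel: "homog 3 cubic_rel"
proof -
  have zlin: "homog 1 (zlin j)" for j
    unfolding zlin_def by (intro homog_sum homog_mconst_mult homog_mvar)
  have "homog (1 + (1 + 1)) (zlin 4 * q_form zlin)" and "homog (1 + 1 + 1) (c_form zlin)"
    unfolding q_form_def c_form_def by (intro homog_mult homog_diff zlin)+
  then show ?thesis
    unfolding cubic_rel_def g_form_def by (simp add: homog_add numeral_3_eq_3)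
qed

lemma meval_zlin: "meval a (zlin j) = (\<Sum>k<length fs. B j k * a k)"
  by (simp add: zlin_def meval_eq_mpoly_eval eval.hom_distribs
      comm_ring_hom.mpoly_eval_mconst[OF comm_ring_hom_id] comm_ring_hom.mpoly_eval_mvar[OF comm_ring_hom_id])

lemma meval_cubic_rel: "meval a cubic_rel = g_form (\<lambda>j. meval a (zlin j))"
  by (simp add: cubic_rel_def meval_eq_mpoly_eval eval.hom_g_form)

lemma meval_cubic_rel_fs: "meval (\<lambda>k. (fs ! k) M) cubic_rel = 0"
proof -
  have "meval (\<lambda>k. (fs ! k) M) cubic_rel = g_form (zcoord M)"
    unfolding meval_cubic_rel by (rule g_form_cong) (simp add: meval_zlin zcoord_fs)
  then show ?thesis
    by (simp add: g_form_zcoord)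
qed

lemma cubic_rel_nonzero: "cubic_rel \<noteq> 0"
proof
  assume "cubic_rel = 0"
  define w :: "nat \<Rightarrow> complex" where "w i = (if i = 0 \<or> i = 3 \<or> i = 4 then 1 else 0)" for i
  define a where "a k = (\<Sum>i<5. A k i * w i)" for k
  have "meval a (zlin j) = w j" if "j < 5" for j
  proof -
    have "meval a (zlin j) = (\<Sum>i<5. (\<Sum>k<length fs. B j k * A k i) * w i)"
      unfolding meval_zlin a_def sum_distrib_left sum_distrib_right
      by (subst sum.swap) (simp add: mult.assoc)
    also have "\<dots> = w j"
      using that by (simp add: BA sum_delta_mult)
    finally show ?thesis .
  qed
  then have "meval a cubic_rel = g_form w"
    unfolding meval_cubic_rel by (intro g_form_cong) simp
  also have "\<dots> = 1"
    by (simp add: g_form_def q_form_def c_form_def w_def)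
  finally show False
    using \<open>cubic_rel = 0\<close> by (simp add: meval_eq_mpoly_eval)
qed

definition zlift :: "nat \<Rightarrow> cpoly4 poly" where
  "zlift k = (\<Sum>i<5. nest_const5 (A k i) * nest_var5 i)"

definition subst_zlin :: "cpoly4 poly \<Rightarrow> mpoly" where
  "subst_zlin = nest_eval5 mconst zlin"

interpretation subst: comm_ring_hom subst_zlin
  unfolding subst_zlin_def by (rule comm_ring_hom.comm_ring_hom_nest_eval5[OF comm_ring_hom_mconst])

lemma nest_eval5_zlift: "k < length fs \<Longrightarrow> nest_eval5 (\<lambda>x. x) (zcoord M) (zlift k) = (fs ! k) M"
  by (simp add: zlift_def fs_zcoord comm_ring_hom.hom_distribs[OF comm_ring_hom.comm_ring_hom_nest_eval5]
      comm_ring_hom_id comm_ring_hom.nest_eval5_const[OF comm_ring_hom_id] comm_ring_hom.nest_eval5_var[OF comm_ring_hom_id])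

lemma subst_zlin_const: "subst_zlin (nest_const5 c) = mconst c"
  unfolding subst_zlin_def by (rule comm_ring_hom.nest_eval5_const[OF comm_ring_hom_mconst])

lemma subst_zlin_var: "i < 5 \<Longrightarrow> subst_zlin (nest_var5 i) = zlin i"
  unfolding subst_zlin_def by (rule comm_ring_hom.nest_eval5_var[OF comm_ring_hom_mconst])

lemma subst_zlin_zlift: "k < length fs \<Longrightarrow> subst_zlin (zlift k) = mvar k"
proof -
  assume "k < length fs"
  have "subst_zlin (zlift k) = (\<Sum>l<length fs. mconst (\<Sum>i<5. A k i * B i l) * mvar l)"
    unfolding zlift_def
    by (simp add: subst.hom_distribs subst_zlin_const subst_zlin_var zlin_def
        comm_ring_hom.hom_distribs[OF comm_ring_hom_mconst]
        sum_distrib_left sum_distrib_right mult_ac sum.swap[of _ "{..<5}"])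
  also have "\<dots> = mvar k"
    using \<open>k < length fs\<close> by (simp add: AB if_distrib[of mconst] sum_delta_mult cong: if_cong)
  finally show ?thesis .
qed

lemma subst_zlin_g_form: "subst_zlin (g_form nest_var5) = cubic_rel"
  unfolding cubic_rel_def subst.hom_g_form by (intro g_form_cong) (simp add: subst_zlin_var)

lemma vars_subst_zlin: "vars (subst_zlin p) \<subseteq> {..<length fs}"
  unfolding subst_zlin_def using vars_zlin by (intro vars_nest_eval5 comm_ring_hom_mconst) auto

text \<open>A form \<open>g\<close> in the ideal, rewritten in the \<open>z\<close>-coordinates, is divisible by \<open>g_form\<close>;
  substituting back gives \<open>g\<close> as a multiple of \<^const>\<open>cubic_rel\<close>.\<close>

lemma ideal_of_subset: "ideal_of fs \<subseteq> gen_ideal (length fs) [cubic_rel]"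
proof
  fix g
  assume "g \<in> ideal_of fs"
  then have vars_g: "vars g \<subseteq> {..<length fs}" and vanish: "\<And>M. meval (\<lambda>k. (fs ! k) M) g = 0"
    unfolding ideal_of_def by auto
  define p where "p = mpoly_eval nest_const5 zlift g"
  have eval_p: "nest_eval5 (\<lambda>x. x) (zcoord M) p = meval (\<lambda>k. (fs ! k) M) g" for M
    unfolding p_def meval_eq_mpoly_eval comm_ring_hom.hom_mpoly_eval[OF comm_ring_hom_nest_const5
        comm_ring_hom.comm_ring_hom_nest_eval5[OF comm_ring_hom_id]] comm_ring_hom.nest_eval5_const[OF comm_ring_hom_id]
    using vars_g by (intro mpoly_eval_cong) (auto simp: nest_eval5_zlift)
  have "subst_zlin p = g"
  proof -
    have "subst_zlin p = mpoly_eval mconst (\<lambda>k. subst_zlin (zlift k)) g"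
      unfolding p_def comm_ring_hom.hom_mpoly_eval[OF comm_ring_hom_nest_const5 subst.comm_ring_hom_axioms]
        subst_zlin_const ..
    also have "\<dots> = mpoly_eval mconst mvar g"
      using vars_g by (intro mpoly_eval_cong) (auto simp: subst_zlin_zlift)
    finally show ?thesis
      by (simp add: mpoly_eval_mconst_mvar)
  qed
  moreover have "g_form nest_var5 dvd p"
    using vanish eval_p by (intro g_form_nest_var5_dvd_if_vanishes_on_zcoord) simp
  then obtain s where "p = g_form nest_var5 * s" ..
  ultimately have "g = subst_zlin s * cubic_rel"
    by (simp add: subst_zlin_g_form subst.hom_mult mult.commute)
  with vars_subst_zlin show "g \<in> gen_ideal (length fs) [cubic_rel]"
    by (auto simp: gen_ideal_single)
qed

lemma gen_ideal_cubic_rel: "gen_ideal (length fs) [cubic_rel] = ideal_of fs"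
proof
  show "gen_ideal (length fs) [cubic_rel] \<subseteq> ideal_of fs"
  proof
    fix g
    assume "g \<in> gen_ideal (length fs) [cubic_rel]"
    then obtain h where g: "g = h * cubic_rel" and "vars h \<subseteq> {..<length fs}"
      by (auto simp: gen_ideal_single)
    then have "vars g \<subseteq> {..<length fs}"
      using vars_cubic_rel by (simp add: vars_mult_subset)
    moreover have "meval (\<lambda>k. (fs ! k) M) g = 0" for M
      using meval_cubic_rel_fs[of M] by (simp add: g meval_eq_mpoly_eval eval.hom_mult)
    ultimately show "g \<in> ideal_of fs"
      by (simp add: ideal_of_def)
  qed
qed (rule ideal_of_subset)

lemma regular_seq_cubic_rel: "regular_seq (length fs) [cubic_rel]"
  unfolding regular_seq_def
proof (intro conjI allI impI)
  show "1 \<notin> gen_ideal (length fs) [cubic_rel]"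
  proof
    assume "1 \<in> gen_ideal (length fs) [cubic_rel]"
    then have "meval (\<lambda>k. (fs ! k) M) 1 = 0" for M
      using meval_cubic_rel_fs by (auto simp: gen_ideal_cubic_rel ideal_of_def)
    then show False
      by (simp add: meval_eq_mpoly_eval eval.hom_one)
  qed
  show "h \<in> gen_ideal (length fs) (take k [cubic_rel])"
    if "k < length [cubic_rel]" and "h * [cubic_rel] ! k \<in> gen_ideal (length fs) (take k [cubic_rel])" for k h
    using that cubic_rel_nonzero by (simp add: gen_ideal_Nil)
qed

lemma complete_intersection_ideal_of: "complete_intersection (length fs) (ideal_of fs)"
  unfolding complete_intersection_def
proof (intro exI conjI)
  show "\<forall>g\<in>set [cubic_rel]. vars g \<subseteq> {..<length fs} \<and> (\<exists>d>0. homog d g)"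
    using vars_cubic_rel homog_cubic_rel by (auto intro!: exI[of _ 3])
qed (fact regular_seq_cubic_rel gen_ideal_cubic_rel)+

end

lemma is_basis_deg1_imp_basis_change:
  assumes "is_basis_deg1 fs"
  shows "\<exists>A B. deg1_basis_change fs A B"
proof -
  have fs_indep: "\<And>c. \<forall>M. (\<Sum>k<length fs. c k * (fs ! k) M) = 0 \<Longrightarrow> \<forall>k<length fs. c k = 0"
    and fs_span: "\<And>F. F \<in> inv_sections 1 \<Longrightarrow> \<exists>c. F = (\<lambda>M. \<Sum>k<length fs. c k * (fs ! k) M)"
    and "set fs \<subseteq> inv_sections 1"
    using assms unfolding is_basis_deg1_def by blast+
  then have "\<exists>a. k < length fs \<longrightarrow> (\<forall>M. (fs ! k) M = (\<Sum>j<5. a j * zcoord M j))" for k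
    using inv_section_in_span by (metis nth_mem subsetD)
  then obtain A where fs_zcoord: "\<And>k M. k < length fs \<Longrightarrow> (fs ! k) M = (\<Sum>j<5. A k j * zcoord M j)"
    by metis
  have "\<exists>b. j < 5 \<longrightarrow> (\<forall>M. zcoord M j = (\<Sum>k<length fs. b k * (fs ! k) M))" for j
    using fs_span zcoord_in_inv_sections by metis
  then obtain B where zcoord_fs: "\<And>j M. j < 5 \<Longrightarrow> zcoord M j = (\<Sum>k<length fs. B j k * (fs ! k) M)"
    by metis
  have "(\<Sum>j<5. A k j * B j l) = (if k = l then 1 else 0)" if "k < length fs" "l < length fs" for k l
    using fs_indep fs_zcoord zcoord_fs that by (rule change_of_basis_inverse)
  moreover have "(\<Sum>k<length fs. B i k * A k j) = (if i = j then 1 else 0)" if "i < 5" "j < 5" for i j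
    using zcoord_linear_independent zcoord_fs fs_zcoord that by (rule change_of_basis_inverse)
  ultimately show ?thesis
    using fs_zcoord zcoord_fs by (blast intro: deg1_basis_change.intro)
qed

theorem corollary4p9:
  shows "\<forall>fs. is_basis_deg1 fs \<longrightarrow> complete_intersection (length fs) (ideal_of fs)"
proof (intro allI impI)
  fix fs
  assume "is_basis_deg1 fs"
  then obtain A B where "deg1_basis_change fs A B"
    using is_basis_deg1_imp_basis_change by blast
  then show "complete_intersection (length fs) (ideal_of fs)"
    by (rule deg1_basis_change.complete_intersection_ideal_of)
qed

end
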